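(* Let $q$ be a prime, $A$ a group of exponent $q$ and order $q^3$, and $B$ a subgroup of order $q$ of the center $Z(A)$. Suppose $A$ acts by automorphisms on a finite group $G$ of order coprime to $q$ with $G=PH$, where $P$ and $H$ are $A$-invariant subgroups, $P$ is a normal $p$-subgroup of $G$ for a prime $p$, and $H$ is a nilpotent $p'$-subgroup. Let $A_1,\dots,A_{q+1}$ be the subgroups of order $q^2$ of $A$ containing $B$. Then $C_P(B)=\prod_{i=1}^{q+1} C_P(A_i)$ and $C_H(B)=\prod_{i=1}^{q+1} C_H(A_i)$.
   Context: For a group $X$ of automorphisms, $C_P(X)$ denotes the set of elements of $P$ fixed by every element of $X$. The products are products of subgroups (sets of products of elements). *)

theory Defs
  imports "HOL-Algebra.Algebra"
begin

definition group_center :: "('a, 'b) monoid_scheme \<Rightarrow> 'a set" where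
  "group_center G = {z \<in> carrier G. \<forall>x \<in> carrier G. z \<otimes>\<^bsub>G\<^esub> x = x \<otimes>\<^bsub>G\<^esub> z}"

definition comm_subgroup :: "('a, 'b) monoid_scheme \<Rightarrow> 'a set \<Rightarrow> 'a set \<Rightarrow> 'a set" where
  "comm_subgroup G K H = generate G (\<Union>k\<in>K. \<Union>h\<in>H.
      {k \<otimes>\<^bsub>G\<^esub> h \<otimes>\<^bsub>G\<^esub> inv\<^bsub>G\<^esub> k \<otimes>\<^bsub>G\<^esub> inv\<^bsub>G\<^esub> h})"

fun lower_central :: "('a, 'b) monoid_scheme \<Rightarrow> 'a set \<Rightarrow> nat \<Rightarrow> 'a set" where
  "lower_central G H 0 = H"
| "lower_central G H (Suc n) = comm_subgroup G (lower_central G H n) H"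

definition nilpotent_subgroup :: "('a, 'b) monoid_scheme \<Rightarrow> 'a set \<Rightarrow> bool" where
  "nilpotent_subgroup G H \<longleftrightarrow> subgroup H G \<and> (\<exists>n. lower_central G H n = {\<one>\<^bsub>G\<^esub>})"

definition acts_by_automorphisms ::
  "('c, 'd) monoid_scheme \<Rightarrow> ('a, 'b) monoid_scheme \<Rightarrow> ('c \<Rightarrow> 'a \<Rightarrow> 'a) \<Rightarrow> bool" where
  "acts_by_automorphisms A G \<alpha> \<longleftrightarrow>
     group_action A (carrier G) \<alpha> \<and> (\<forall>a \<in> carrier A. \<alpha> a \<in> hom G G)"

definition fixed_points :: "('c \<Rightarrow> 'a \<Rightarrow> 'a) \<Rightarrow> 'c set \<Rightarrow> 'a set \<Rightarrow> 'a set" where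
  "fixed_points f Y T = {y \<in> T. \<forall>c \<in> Y. f c y = y}"

fun set_prod_list :: "('a, 'b) monoid_scheme \<Rightarrow> 'a set list \<Rightarrow> 'a set" where
  "set_prod_list G [] = {\<one>\<^bsub>G\<^esub>}"
| "set_prod_list G (S # Ss) = S <#>\<^bsub>G\<^esub> set_prod_list G Ss"

end

theory Submission
  imports Defs
begin

(* Let U be an A-invariant nilpotent subgroup of G and Q = C_U(B), which is A-invariant because
   B is central.  Along a central series of U (the lower central series of H, the upper central
   series of the p-group P) we show that Q = C_U(A_1) ... C_U(A_(q+1)) modulo each term.  A step
   of the descent takes place in an abelian section V = (Q \<inter> L)/(Q \<inter> K) on which B acts
   trivially: the norms N_F(v) = prod_(a in F) a(v) satisfy prod_i N_(A_i)(v) = N_A(v) v^(q^2),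
   because every a outside B lies in exactly one A_i and every b in B in all q + 1 of them.
   As |V| is prime to q, this writes v as a product of A_i-fixed elements.  These lift to
   A_i-fixed elements of Q \<inter> L, since a q-group acting on a coset of order prime to q has a
   fixed point, and the commutators created when the new factors are merged with the old ones
   lie in the next term of the series. *)

section \<open>Fixed points of actions of \<open>p\<close>-groups\<close>

lemma (in group_action) fixed_point_exists:
  assumes ord: "order G = p ^ k" and p: "Factorial_Ring.prime p"
    and Y: "finite Y" "Y \<subseteq> E" and inv: "\<forall>g\<in>carrier G. \<phi> g ` Y \<subseteq> Y"
    and ndvd: "\<not> p dvd card Y"
  shows "\<exists>x\<in>Y. \<forall>g\<in>carrier G. \<phi> g x = x"
proof (rule ccontr)
  assume no_fixed: "\<not> ?thesis"
  have orbit_sub: "orbit G \<phi> x \<subseteq> Y" if "x \<in> Y" for x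
    using that inv unfolding orbit_def by blast
  have "p dvd card (\<Union>((\<lambda>x. orbit G \<phi> x) ` Y))"
  proof (rule dvd_partition)
    show "finite (\<Union>((\<lambda>x. orbit G \<phi> x) ` Y))"
      using orbit_sub Y(1) by (meson UN_least finite_subset)
    show "\<forall>Orb\<in>(\<lambda>x. orbit G \<phi> x) ` Y. p dvd card Orb"
    proof
      fix Orb assume "Orb \<in> (\<lambda>x. orbit G \<phi> x) ` Y"
      then obtain x where x: "x \<in> Y" and Orb: "Orb = orbit G \<phi> x" by blast
      have "card Orb dvd p ^ k"
        using orbit_stabilizer_theorem[of x] x Y(2) Orb ord by (metis dvd_triv_left subsetD)
      then obtain i where i: "card Orb = p ^ i" using divides_primepow_nat[OF p] by blast
      obtain g where g: "g \<in> carrier G" "\<phi> g x \<noteq> x" using no_fixed x by blast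
      have "{x, \<phi> g x} \<subseteq> Orb"
        using Orb g orbit_refl x Y(2) unfolding orbit_def by blast
      moreover have "finite Orb" using orbit_sub[OF x] Y(1) Orb finite_subset by blast
      ultimately have "card Orb \<noteq> 1" using g(2) card_mono[of Orb "{x, \<phi> g x}"] by auto
      then show "p dvd card Orb" using i by (cases i) auto
    qed
    show "\<forall>Orb1\<in>(\<lambda>x. orbit G \<phi> x) ` Y. \<forall>Orb2\<in>(\<lambda>x. orbit G \<phi> x) ` Y. Orb1 \<noteq> Orb2 \<longrightarrow> Orb1 \<inter> Orb2 = {}"
      using disjoint_union Y(2) unfolding orbits_def by blast
  qed
  moreover have "\<Union>((\<lambda>x. orbit G \<phi> x) ` Y) = Y"
    using orbit_sub orbit_refl Y(2) by blast
  ultimately show False using ndvd by simp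
qed

lemma (in group) p_group_center_nontrivial:
  assumes fin: "finite (carrier G)" and ord: "order G = p ^ k" and "k > 0"
    and p: "Factorial_Ring.prime p"
  shows "\<exists>z\<in>carrier G. z \<noteq> \<one> \<and> (\<forall>y\<in>carrier G. z \<otimes> y = y \<otimes> z)"
proof -
  interpret conj: group_action G "carrier G" "\<lambda>g. \<lambda>h\<in>carrier G. g \<otimes> h \<otimes> inv g"
    by (rule action_by_conjugation)
  have "\<not> p dvd p ^ k - 1"
  proof
    assume "p dvd p ^ k - 1"
    moreover have "p dvd p ^ k" using \<open>k > 0\<close> by simp
    ultimately have "p dvd p ^ k - (p ^ k - 1)" by (rule dvd_diff_nat[rotated])
    moreover have "p ^ k \<ge> 1" using prime_gt_0_nat[OF p] by simp
    ultimately have "p dvd 1" by simp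
    then show False using p by simp
  qed
  moreover have "card (carrier G - {\<one>}) = p ^ k - 1"
    using ord fin unfolding order_def by simp
  moreover have "\<forall>g\<in>carrier G. (\<lambda>h\<in>carrier G. g \<otimes> h \<otimes> inv g) ` (carrier G - {\<one>}) \<subseteq> carrier G - {\<one>}"
  proof (intro ballI image_subsetI)
    fix g h assume g: "g \<in> carrier G" and h: "h \<in> carrier G - {\<one>}"
    have "g \<otimes> h \<otimes> inv g \<noteq> \<one>"
    proof
      assume "g \<otimes> h \<otimes> inv g = \<one>"
      then have "g \<otimes> h = g \<otimes> \<one>" using g h by (simp add: inv_solve_right')
      then show False using g h by simp
    qed
    then show "(\<lambda>h\<in>carrier G. g \<otimes> h \<otimes> inv g) h \<in> carrier G - {\<one>}" using g h by simp
  qed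
  ultimately have "\<exists>z\<in>carrier G - {\<one>}. \<forall>g\<in>carrier G. (\<lambda>h\<in>carrier G. g \<otimes> h \<otimes> inv g) z = z"
    using fin by (intro conj.fixed_point_exists[OF ord p]) auto
  then obtain z where z: "z \<in> carrier G - {\<one>}"
    and fixed: "\<forall>g\<in>carrier G. (\<lambda>h\<in>carrier G. g \<otimes> h \<otimes> inv g) z = z"
    by blast
  have "z \<otimes> y = y \<otimes> z" if y: "y \<in> carrier G" for y
  proof -
    have "y \<otimes> z \<otimes> inv y = z" using fixed y z by auto
    then show ?thesis using y z by (simp add: inv_solve_right')
  qed
  then show ?thesis using z by blast
qed

section \<open>Ordered products and commutators\<close>

abbreviation commutator :: "('a, 'b) monoid_scheme \<Rightarrow> 'a \<Rightarrow> 'a \<Rightarrow> 'a" where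
  "commutator G x y \<equiv> x \<otimes>\<^bsub>G\<^esub> y \<otimes>\<^bsub>G\<^esub> inv\<^bsub>G\<^esub> x \<otimes>\<^bsub>G\<^esub> inv\<^bsub>G\<^esub> y"

lemma (in group) mult_inv_cancel_left [simp]:
  "x \<in> carrier G \<Longrightarrow> y \<in> carrier G \<Longrightarrow> x \<otimes> (inv x \<otimes> y) = y"
  by (simp add: m_assoc[symmetric])

lemma (in group) inv_mult_cancel_left [simp]:
  "x \<in> carrier G \<Longrightarrow> y \<in> carrier G \<Longrightarrow> inv x \<otimes> (x \<otimes> y) = y"
  by (simp add: m_assoc[symmetric])

fun mult_list :: "('a, 'b) monoid_scheme \<Rightarrow> 'a list \<Rightarrow> 'a" where
  "mult_list G [] = \<one>\<^bsub>G\<^esub>"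
| "mult_list G (x # xs) = x \<otimes>\<^bsub>G\<^esub> mult_list G xs"

lemma mult_list_closed:
  assumes "subgroup H G" "set xs \<subseteq> H"
  shows "mult_list G xs \<in> H"
  using assms(2) by (induct xs) (auto simp: subgroup.one_closed[OF assms(1)] subgroup.m_closed[OF assms(1)])

lemma r_coset_carrier_update [simp]: "N #>\<^bsub>G\<lparr>carrier := M\<rparr>\<^esub> x = N #>\<^bsub>G\<^esub> x"
  unfolding r_coset_def by simp

lemma mult_list_carrier_update [simp]: "mult_list (G\<lparr>carrier := M\<rparr>) xs = mult_list G xs"
  by (induct xs) simp_all

lemma set_prod_list_map:
  assumes "distinct js"
  shows "set_prod_list G (map C js) = {mult_list G (map c js) | c. \<forall>j\<in>set js. c j \<in> C j}"
  using assms
proof (induct js)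
  case (Cons j js)
  show ?case
  proof (intro equalityI subsetI)
    fix z assume "z \<in> set_prod_list G (map C (j # js))"
    then obtain x c where "x \<in> C j" "\<forall>i\<in>set js. c i \<in> C i" "z = x \<otimes>\<^bsub>G\<^esub> mult_list G (map c js)"
      using Cons by (auto simp: set_mult_def)
    then show "z \<in> {mult_list G (map c (j # js)) | c. \<forall>i\<in>set (j # js). c i \<in> C i}"
      using Cons.prems by (intro CollectI exI[of _ "c(j := x)"]) auto
  next
    fix z assume "z \<in> {mult_list G (map c (j # js)) | c. \<forall>i\<in>set (j # js). c i \<in> C i}"
    then show "z \<in> set_prod_list G (map C (j # js))"
      using Cons by (auto simp: set_mult_def)
  qed
qed simp

lemma (in group) mult_list_mult_rearrange:
  assumes U: "subgroup U G" and K: "subgroup K G" and L: "subgroup L G" "L \<subseteq> U"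
    and K_normal: "\<forall>x\<in>U. \<forall>k\<in>K. x \<otimes> k \<otimes> inv x \<in> K"
    and comm: "\<forall>l\<in>L. \<forall>x\<in>U. commutator G l x \<in> K"
    and cd: "\<forall>j\<in>set js. c j \<in> U \<and> d j \<in> L"
  shows "\<exists>k\<in>K. mult_list G (map c js) \<otimes> mult_list G (map d js)
                 = mult_list G (map (\<lambda>j. c j \<otimes> d j) js) \<otimes> k"
  using cd
proof (induct js)
  case Nil
  then show ?case using subgroup.one_closed[OF K] by force
next
  case (Cons j js)
  obtain k where k: "k \<in> K"
    and IH: "mult_list G (map c js) \<otimes> mult_list G (map d js) = mult_list G (map (\<lambda>j. c j \<otimes> d j) js) \<otimes> k"
    using Cons by auto
  define x where "x = mult_list G (map c js)"
  define y where "y = mult_list G (map d js)"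
  have U_carrier: "U \<subseteq> carrier G" using U subgroup.subset by blast
  have "\<forall>i\<in>set js. c i \<in> U \<and> d i \<in> U" using Cons.prems L(2) by auto
  then have x: "x \<in> U" and y: "y \<in> U"
    unfolding x_def y_def by (auto intro!: mult_list_closed[OF U])
  have cd_carrier: "mult_list G (map (\<lambda>j. c j \<otimes> d j) js) \<in> carrier G"
    using \<open>\<forall>i\<in>set js. c i \<in> U \<and> d i \<in> U\<close> U_carrier
    by (force intro!: mult_list_closed[OF subgroup_self])
  have k_carrier: "k \<in> carrier G" using k K subgroup.subset by blast
  have cj: "c j \<in> U" and dj: "d j \<in> L" "d j \<in> U" using Cons.prems L(2) by auto
  have carrier: "c j \<in> carrier G" "d j \<in> carrier G" "x \<in> carrier G" "y \<in> carrier G"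
    using cj dj x y U_carrier by auto
  txt \<open>Moving \<open>d j\<close> to the left past \<open>x\<close> costs (a conjugate of) the commutator of
    \<open>inv x\<close> and \<open>inv (d j)\<close>, the inverse of a commutator of \<open>inv (d j) \<in> L\<close> with \<open>inv x \<in> U\<close>.\<close>
  have "commutator G (inv (d j)) (inv x) \<in> K"
    using comm subgroup.m_inv_closed[OF L(1) dj(1)] subgroup.m_inv_closed[OF U x] by blast
  then have "inv (commutator G (inv (d j)) (inv x)) \<in> K"
    by (rule subgroup.m_inv_closed[OF K])
  moreover have "inv (commutator G (inv (d j)) (inv x)) = commutator G (inv x) (inv (d j))"
    using carrier by (simp add: inv_mult_group m_assoc)
  ultimately have "inv y \<otimes> commutator G (inv x) (inv (d j)) \<otimes> inv (inv y) \<in> K"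
    using K_normal subgroup.m_inv_closed[OF U y] by simp
  then have k': "inv y \<otimes> commutator G (inv x) (inv (d j)) \<otimes> y \<in> K"
    using carrier by simp
  have "mult_list G (map c (j # js)) \<otimes> mult_list G (map d (j # js))
      = (c j \<otimes> d j) \<otimes> (x \<otimes> y) \<otimes> (inv y \<otimes> commutator G (inv x) (inv (d j)) \<otimes> y)"
    using carrier by (simp add: x_def[symmetric] y_def[symmetric] m_assoc)
  also have "\<dots> = mult_list G (map (\<lambda>j. c j \<otimes> d j) (j # js)) \<otimes> (k \<otimes> (inv y \<otimes> commutator G (inv x) (inv (d j)) \<otimes> y))"
    using IH carrier cd_carrier k_carrier
    unfolding x_def[symmetric] y_def[symmetric] by (simp add: m_assoc)
  finally show ?case
    using subgroup.m_closed[OF K k k'] by blast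
qed

section \<open>Norms in abelian groups acted on by a group\<close>

lemma (in comm_group) hom_finprod:
  assumes h: "h \<in> hom G G" and f: "f \<in> F \<rightarrow> carrier G"
  shows "h (finprod G f F) = finprod G (h \<circ> f) F"
proof -
  interpret group_hom G G h
    using h by (simp add: group_hom_def group_hom_axioms_def is_group)
  show ?thesis
    using f by (induct F rule: infinite_finite_induct) (auto simp: Pi_def)
qed

lemma (in comm_group) finprod_nat_pow:
  assumes "f \<in> F \<rightarrow> carrier G"
  shows "(finprod G f F) [^] (n::nat) = finprod G (\<lambda>x. f x [^] n) F"
  using assms by (induct n) (auto simp: Pi_def)

lemma (in comm_group) finprod_update_mult:
  assumes "finite I" "i \<in> I" "f \<in> I \<rightarrow> carrier G" "c \<in> carrier G"
  shows "finprod G (f(i := c \<otimes> f i)) I = c \<otimes> finprod G f I"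
proof -
  have "finprod G (f(i := c \<otimes> f i)) I = finprod G (\<lambda>j. (if j = i then c else \<one>) \<otimes> f j) I"
    using assms by (intro finprod_cong') (auto simp: Pi_iff)
  also have "\<dots> = c \<otimes> finprod G f I"
    using assms finprod_singleton_swap[of i I "\<lambda>_. c"] by (subst finprod_multf) auto
  finally show ?thesis .
qed

lemma (in comm_group) finprod_finprod_multiplicity:
  assumes I: "finite I" and S: "finite S" and FS: "\<forall>i\<in>I. F i \<subseteq> S" and g: "g \<in> S \<rightarrow> carrier G"
  shows "finprod G (\<lambda>i. finprod G g (F i)) I = finprod G (\<lambda>a. g a [^] card {i\<in>I. a \<in> F i}) S"
  using I FS
proof (induct I rule: finite_induct)
  case (insert j I)
  have "finprod G (\<lambda>i. finprod G g (F i)) (insert j I)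
      = finprod G g (F j) \<otimes> finprod G (\<lambda>a. g a [^] card {i\<in>I. a \<in> F i}) S"
    using insert g by (subst finprod_insert) (auto simp: Pi_iff subset_iff)
  also have "finprod G g (F j) = finprod G (\<lambda>a. if a \<in> F j then g a else \<one>) S"
    using insert g S by (intro finprod_mono_neutral_cong_left) (auto simp: Pi_iff)
  also have "\<dots> \<otimes> finprod G (\<lambda>a. g a [^] card {i\<in>I. a \<in> F i}) S
      = finprod G (\<lambda>a. g a [^] card {i\<in>insert j I. a \<in> F i}) S"
  proof (subst finprod_multf[symmetric], (use g in auto)[2], rule finprod_cong')
    fix a assume a: "a \<in> S"
    have "{i\<in>insert j I. a \<in> F i} = (if a \<in> F j then insert j {i\<in>I. a \<in> F i} else {i\<in>I. a \<in> F i})"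
      by auto
    then have "card {i\<in>insert j I. a \<in> F i}
        = (if a \<in> F j then Suc (card {i\<in>I. a \<in> F i}) else card {i\<in>I. a \<in> F i})"
      using insert.hyps by simp
    then show "(if a \<in> F j then g a else \<one>) \<otimes> g a [^] card {i\<in>I. a \<in> F i}
        = g a [^] card {i\<in>insert j I. a \<in> F i}"
      using funcset_mem[OF g a] by (auto simp: m_comm)
  qed (use g in auto)
  finally show ?case .
qed simp

lemma (in group) coprime_pow_root:
  assumes "coprime n (order G)"
  shows "\<exists>r::nat. \<forall>x\<in>carrier G. (x [^] n) [^] r = x"
proof (cases "order G = 1")
  case True
  then show ?thesis using order_one_triv_iff by (auto intro: exI[of _ 0])
next
  case False
  then obtain r s where rs: "n * r = order G * s + 1"
    using coprime_bezout_strong[OF assms] by blast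
  have "(x [^] n) [^] r = x" if x: "x \<in> carrier G" for x
  proof -
    have "(x [^] n) [^] r = (x [^] order G) [^] s \<otimes> x"
      using x rs by (simp add: nat_pow_pow nat_pow_mult[symmetric])
    then show ?thesis using x pow_order_eq_1[OF x] by simp
  qed
  then show ?thesis by blast
qed

locale comm_group_action = V: comm_group V + A: group A
  for V :: "('v, 'e) monoid_scheme" and A :: "('c, 'd) monoid_scheme" +
  fixes \<beta> :: "'c \<Rightarrow> 'v \<Rightarrow> 'v"
  assumes \<beta>_hom: "a \<in> carrier A \<Longrightarrow> \<beta> a \<in> hom V V"
    and \<beta>_compose: "\<lbrakk>a \<in> carrier A; b \<in> carrier A; v \<in> carrier V\<rbrakk> \<Longrightarrow> \<beta> (a \<otimes>\<^bsub>A\<^esub> b) v = \<beta> a (\<beta> b v)"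
begin

lemma \<beta>_group_hom: "a \<in> carrier A \<Longrightarrow> group_hom V V (\<beta> a)"
  using \<beta>_hom by (simp add: group_hom_def group_hom_axioms_def V.is_group)

lemma \<beta>_closed: "a \<in> carrier A \<Longrightarrow> v \<in> carrier V \<Longrightarrow> \<beta> a v \<in> carrier V"
  using \<beta>_hom by (auto simp: hom_def)

definition action_norm :: "'c set \<Rightarrow> 'v \<Rightarrow> 'v" where
  "action_norm F v = finprod V (\<lambda>a. \<beta> a v) F"

lemma action_norm_closed: "F \<subseteq> carrier A \<Longrightarrow> v \<in> carrier V \<Longrightarrow> action_norm F v \<in> carrier V"
  unfolding action_norm_def using \<beta>_closed by (intro V.finprod_closed) auto

lemma action_norm_fixed:
  assumes F: "subgroup F A" and g: "g \<in> F" and v: "v \<in> carrier V"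
  shows "\<beta> g (action_norm F v) = action_norm F v"
proof -
  have F_sub: "F \<subseteq> carrier A" and gA: "g \<in> carrier A"
    using F g subgroup.subset by blast+
  have inj: "inj_on (\<lambda>a. g \<otimes>\<^bsub>A\<^esub> a) F"
    using F_sub gA by (intro inj_onI) (metis A.l_cancel subsetD)
  have "\<beta> g (action_norm F v) = finprod V (\<lambda>a. \<beta> (g \<otimes>\<^bsub>A\<^esub> a) v) F"
    unfolding action_norm_def using \<beta>_hom gA F_sub \<beta>_closed v \<beta>_compose
    by (subst V.hom_finprod) (auto intro!: V.finprod_cong')
  also have "\<dots> = finprod V (\<lambda>a. \<beta> a v) ((\<lambda>a. g \<otimes>\<^bsub>A\<^esub> a) ` F)"
    using F_sub gA \<beta>_closed v by (subst V.finprod_reindex[OF _ inj]) (auto simp: Pi_def)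
  also have "(\<lambda>a. g \<otimes>\<^bsub>A\<^esub> a) ` F = F"
    using A.coset_join3[OF gA F g] unfolding l_coset_def by auto
  finally show ?thesis unfolding action_norm_def .
qed

text \<open>Counting multiplicities, the norms over the \<open>As i\<close> multiply to the norm over \<open>A\<close> times
  \<open>q\<close> extra copies of the norm over the trivially acting \<open>B\<close>, which is \<open>v [^] q\<close>.\<close>
lemma prod_action_norms:
  assumes fin_A: "finite (carrier A)"
    and B: "B \<subseteq> carrier A" "card B = q" "\<And>b w. b \<in> B \<Longrightarrow> w \<in> carrier V \<Longrightarrow> \<beta> b w = w"
    and I: "finite I" "\<And>i. i \<in> I \<Longrightarrow> As i \<subseteq> carrier A"
    and count: "\<And>a. a \<in> carrier A \<Longrightarrow> card {i\<in>I. a \<in> As i} = (if a \<in> B then q + 1 else 1)"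
    and v: "v \<in> carrier V"
  shows "finprod V (\<lambda>i. action_norm (As i) v) I = action_norm (carrier A) v \<otimes>\<^bsub>V\<^esub> v [^]\<^bsub>V\<^esub> (q * q)"
proof -
  have "finprod V (\<lambda>i. action_norm (As i) v) I
      = finprod V (\<lambda>a. \<beta> a v [^]\<^bsub>V\<^esub> card {i\<in>I. a \<in> As i}) (carrier A)"
    unfolding action_norm_def using I \<beta>_closed v
    by (intro V.finprod_finprod_multiplicity[OF I(1) fin_A]) auto
  also have "\<dots> = finprod V (\<lambda>a. \<beta> a v \<otimes>\<^bsub>V\<^esub> (if a \<in> B then v [^]\<^bsub>V\<^esub> q else \<one>\<^bsub>V\<^esub>)) (carrier A)"
    using count B(3) \<beta>_closed v by (intro V.finprod_cong') (auto simp: V.m_comm)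
  also have "\<dots> = action_norm (carrier A) v \<otimes>\<^bsub>V\<^esub> finprod V (\<lambda>a. v [^]\<^bsub>V\<^esub> q) B"
    unfolding action_norm_def using \<beta>_closed v B(1) fin_A
    by (subst V.finprod_multf) (auto simp: Pi_def intro!: V.finprod_mono_neutral_cong_right)
  also have "finprod V (\<lambda>a. v [^]\<^bsub>V\<^esub> q) B = v [^]\<^bsub>V\<^esub> (q * q)"
    using v B(2) by (simp add: V.finprod_const V.nat_pow_pow)
  finally show ?thesis .
qed

text \<open>Since \<open>q\<close> is prime to \<open>|V|\<close>, raising to the power \<open>q\<^sup>2\<close> can be undone; this turns the
  identity above into a factorisation of \<open>v\<close> into fixed points of the \<open>As i\<close>, the \<open>A\<close>-fixed
  factor being absorbed into one of them.\<close>
theorem fixed_points_decomposition: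
  assumes fin_A: "finite (carrier A)" and coprime: "coprime (order V) q"
    and B: "B \<subseteq> carrier A" "card B = q" "\<And>b w. b \<in> B \<Longrightarrow> w \<in> carrier V \<Longrightarrow> \<beta> b w = w"
    and I: "finite I" "\<And>i. i \<in> I \<Longrightarrow> subgroup (As i) A"
    and count: "\<And>a. a \<in> carrier A \<Longrightarrow> card {i\<in>I. a \<in> As i} = (if a \<in> B then q + 1 else 1)"
    and v: "v \<in> carrier V"
  shows "\<exists>y. (\<forall>i\<in>I. y i \<in> carrier V \<and> (\<forall>a\<in>As i. \<beta> a (y i) = y i)) \<and> v = finprod V y I"
proof -
  have As_sub: "As i \<subseteq> carrier A" if "i \<in> I" for i
    using I(2)[OF that] subgroup.subset by blast
  define t where "t = inv\<^bsub>V\<^esub> action_norm (carrier A) v"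
  define z where "z i = action_norm (As i) v" for i
  have t: "t \<in> carrier V" "\<And>a. a \<in> carrier A \<Longrightarrow> \<beta> a t = t"
    unfolding t_def using action_norm_closed[OF _ v] action_norm_fixed[OF A.subgroup_self _ v]
    by (auto simp: group_hom.hom_inv[OF \<beta>_group_hom])
  have z: "z \<in> I \<rightarrow> carrier V" "\<And>i a. i \<in> I \<Longrightarrow> a \<in> As i \<Longrightarrow> \<beta> a (z i) = z i"
    unfolding z_def using action_norm_closed[OF As_sub v] action_norm_fixed[OF I(2) _ v] by auto
  have "coprime (q * q) (order V)" using coprime by (simp add: coprime_commute)
  then obtain r :: nat where r: "\<forall>w\<in>carrier V. (w [^]\<^bsub>V\<^esub> (q * q)) [^]\<^bsub>V\<^esub> r = w"
    using V.coprime_pow_root by blast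
  have "v [^]\<^bsub>V\<^esub> (q * q) = t \<otimes>\<^bsub>V\<^esub> finprod V z I"
    using prod_action_norms[OF fin_A B I(1) As_sub count v] v action_norm_closed[OF _ v]
    unfolding t_def z_def by (simp add: V.m_assoc[symmetric])
  then have v_eq: "v = t [^]\<^bsub>V\<^esub> r \<otimes>\<^bsub>V\<^esub> finprod V (\<lambda>i. z i [^]\<^bsub>V\<^esub> r) I"
    using r[rule_format, OF v] t(1) z(1) by (simp add: V.nat_pow_distrib V.finprod_nat_pow)
  have "card {i\<in>I. \<one>\<^bsub>A\<^esub> \<in> As i} \<noteq> 0" using count by simp
  then have "{i\<in>I. \<one>\<^bsub>A\<^esub> \<in> As i} \<noteq> {}" by (intro notI) simp
  then obtain i0 where i0: "i0 \<in> I" by blast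
  define y where "y = (\<lambda>i. z i [^]\<^bsub>V\<^esub> r)(i0 := t [^]\<^bsub>V\<^esub> r \<otimes>\<^bsub>V\<^esub> z i0 [^]\<^bsub>V\<^esub> r)"
  have "\<forall>i\<in>I. y i \<in> carrier V \<and> (\<forall>a\<in>As i. \<beta> a (y i) = y i)"
    unfolding y_def using t z As_sub
    by (auto simp: group_hom.hom_mult[OF \<beta>_group_hom] group_hom.hom_nat_pow[OF \<beta>_group_hom]
        Pi_iff subset_iff)
  moreover have "v = finprod V y I"
    unfolding y_def v_eq using I(1) i0 z(1) t(1) by (subst V.finprod_update_mult) auto
  ultimately show ?thesis by blast
qed

end

section \<open>The subgroups of order \<open>q\<^sup>2\<close> containing \<open>B\<close>\<close>

lemma subgroup_nat_pow_closed:
  assumes "subgroup B G" "x \<in> B"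
  shows "x [^]\<^bsub>G\<^esub> (n::nat) \<in> B"
  using assms by (induct n) (auto simp: subgroup.one_closed subgroup.m_closed)

lemma (in group) pow_mem_subgroup_imp_mem:
  assumes q: "Factorial_Ring.prime q" and a: "a \<in> carrier G" "a [^] q = \<one>"
    and B: "subgroup B G" and d: "0 < d" "d < q" and ad: "a [^] (d::nat) \<in> B"
  shows "a \<in> B"
proof -
  have "coprime d q"
    using d q by (metis coprime_commute nat_dvd_not_less prime_imp_coprime_nat)
  moreover have "q \<noteq> 1" using q by auto
  ultimately obtain u v where uv: "d * u = q * v + 1" using coprime_bezout_strong by blast
  have "(a [^] d) [^] u = (a [^] q) [^] v \<otimes> a"
    using a(1) uv by (simp add: nat_pow_pow nat_pow_mult[symmetric])
  then show ?thesis
    using subgroup_nat_pow_closed[OF B ad, of u] a by simp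
qed

lemma (in group) central_cyclic_product_subgroup:
  assumes B: "subgroup B G" "B \<subseteq> group_center G"
    and a: "a \<in> carrier G" "a [^] (q::nat) = \<one>" and q: "q > 0"
  shows "subgroup {b \<otimes> a [^] (j::nat) | b j. b \<in> B} G"
proof -
  have B_carrier: "B \<subseteq> carrier G" using B(1) subgroup.subset by blast
  have central: "b \<otimes> y = y \<otimes> b" if "b \<in> B" "y \<in> carrier G" for b y
    using B(2) that unfolding group_center_def by blast
  show ?thesis
  proof (rule subgroupI)
    show "{b \<otimes> a [^] (j::nat) | b j. b \<in> B} \<subseteq> carrier G"
      using B_carrier a by auto
    show "{b \<otimes> a [^] (j::nat) | b j. b \<in> B} \<noteq> {}"
      using B(1) subgroup.one_closed by blast
  next
    fix x assume "x \<in> {b \<otimes> a [^] (j::nat) | b j. b \<in> B}"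
    then obtain b i where b: "b \<in> B" and x: "x = b \<otimes> a [^] (i::nat)" by blast
    have bG: "b \<in> carrier G" using b B_carrier by blast
    have "i * (q - 1) + i = q * i" using q by (simp add: algebra_simps)
    then have "a [^] (i * (q - 1)) \<otimes> a [^] i = (a [^] q) [^] i"
      using a(1) by (simp add: nat_pow_mult nat_pow_pow)
    then have inv_pow: "inv (a [^] i) = a [^] (i * (q - 1))"
      using a by (simp add: inv_equality)
    have "inv x = inv (a [^] i) \<otimes> inv b"
      using bG a(1) unfolding x by (simp add: inv_mult_group)
    also have "\<dots> = inv b \<otimes> a [^] (i * (q - 1))"
      using central[OF subgroup.m_inv_closed[OF B(1) b]] a(1) inv_pow by simp
    finally have "inv x = inv b \<otimes> a [^] (i * (q - 1))" .
    then show "inv x \<in> {b \<otimes> a [^] (j::nat) | b j. b \<in> B}"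
      using subgroup.m_inv_closed[OF B(1) b] by blast
  next
    fix x y
    assume "x \<in> {b \<otimes> a [^] (j::nat) | b j. b \<in> B}" "y \<in> {b \<otimes> a [^] (j::nat) | b j. b \<in> B}"
    then obtain b i b' j where b: "b \<in> B" "b' \<in> B"
      and xy: "x = b \<otimes> a [^] (i::nat)" "y = b' \<otimes> a [^] (j::nat)" by blast
    have bG: "b \<in> carrier G" "b' \<in> carrier G" using b B_carrier by auto
    have "x \<otimes> y = (b \<otimes> b') \<otimes> a [^] (i + j)"
      using bG a central[OF b(2), of "a [^] i"] unfolding xy
      by (simp add: m_assoc nat_pow_mult[symmetric]) (simp add: m_assoc[symmetric])
    then show "x \<otimes> y \<in> {b \<otimes> a [^] (j::nat) | b j. b \<in> B}"
      using subgroup.m_closed[OF B(1) b] by blast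
  qed
qed

lemma (in group) mult_pow_eq_imp_eq:
  assumes q: "Factorial_Ring.prime q" and B: "subgroup B G"
    and a: "a \<in> carrier G" "a [^] q = \<one>" "a \<notin> B"
    and b: "b \<in> B" "b' \<in> B" and ij: "i \<le> j" "j < q"
    and eq: "b \<otimes> a [^] i = b' \<otimes> a [^] (j::nat)"
  shows "i = j \<and> b = b'"
proof -
  have bG: "b \<in> carrier G" "b' \<in> carrier G" using b subgroup.mem_carrier[OF B] by auto
  have "a [^] (j - i) \<otimes> a [^] i = a [^] j"
    using a(1) ij(1) by (simp add: nat_pow_mult)
  then have "b \<otimes> a [^] i = (b' \<otimes> a [^] (j - i)) \<otimes> a [^] i"
    using eq bG a(1) by (simp add: m_assoc)
  then have b_eq: "b = b' \<otimes> a [^] (j - i)"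
    using bG a(1) by simp
  then have "a [^] (j - i) = inv b' \<otimes> b"
    using bG a by (simp add: m_assoc[symmetric])
  then have "a [^] (j - i) \<in> B"
    using b by (simp add: subgroup.m_closed[OF B] subgroup.m_inv_closed[OF B])
  moreover have "j - i < q" using ij by linarith
  ultimately have "j - i = 0"
    using pow_mem_subgroup_imp_mem[OF q a(1,2) B, of "j - i"] a(3) by (cases "j - i = 0") auto
  then show ?thesis using b_eq bG ij by simp
qed

lemma (in group) card_central_cyclic_product:
  assumes q: "Factorial_Ring.prime q" and B: "subgroup B G" "finite B"
    and a: "a \<in> carrier G" "a [^] q = \<one>" "a \<notin> B"
  shows "card {b \<otimes> a [^] (j::nat) | b j. b \<in> B} = card B * q"
proof -
  define f where "f = (\<lambda>(b, j). b \<otimes> a [^] (j::nat))"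
  have pow_mod: "a [^] j = a [^] (j mod q)" for j :: nat
  proof -
    have "(a [^] q) [^] (j div q) \<otimes> a [^] (j mod q) = a [^] (q * (j div q) + j mod q)"
      using a(1) by (simp add: nat_pow_pow nat_pow_mult)
    then show ?thesis using a by simp
  qed
  have image: "{b \<otimes> a [^] (j::nat) | b j. b \<in> B} = f ` (B \<times> {..<q})"
  proof
    show "{b \<otimes> a [^] (j::nat) | b j. b \<in> B} \<subseteq> f ` (B \<times> {..<q})"
    proof
      fix x assume "x \<in> {b \<otimes> a [^] (j::nat) | b j. b \<in> B}"
      then obtain b j where "b \<in> B" "x = b \<otimes> a [^] (j::nat)" by blast
      moreover have "j mod q < q" using prime_gt_0_nat[OF q] by simp
      ultimately show "x \<in> f ` (B \<times> {..<q})"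
        unfolding f_def using pow_mod[of j] by force
    qed
  qed (auto simp: f_def)
  have "inj_on f (B \<times> {..<q})"
  proof (rule inj_onI, clarsimp simp: f_def)
    fix b i b' j assume "b \<in> B" "b' \<in> B" "i < q" "j < q" "b \<otimes> a [^] i = b' \<otimes> a [^] j"
    then show "b = b' \<and> i = j"
      using mult_pow_eq_imp_eq[OF q B(1) a, of b b' i j] mult_pow_eq_imp_eq[OF q B(1) a, of b' b j i]
      by (cases "i \<le> j") auto
  qed
  then show ?thesis
    unfolding image by (simp add: card_image card_cartesian_product)
qed

lemma (in group) central_cyclic_product_contains:
  assumes B: "subgroup B G" and a: "a \<in> carrier G"
  shows "B \<subseteq> {b \<otimes> a [^] (j::nat) | b j. b \<in> B}" "a \<in> {b \<otimes> a [^] (j::nat) | b j. b \<in> B}"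
proof -
  have "b = b \<otimes> a [^] (0::nat)" if "b \<in> B" for b
    using that subgroup.mem_carrier[OF B] by simp
  then show "B \<subseteq> {b \<otimes> a [^] (j::nat) | b j. b \<in> B}" by blast
  have "a = \<one> \<otimes> a [^] (1::nat)" using a by simp
  then show "a \<in> {b \<otimes> a [^] (j::nat) | b j. b \<in> B}" using subgroup.one_closed[OF B] by blast
qed

lemma (in group) central_cyclic_product_least:
  assumes "subgroup H G" "B \<subseteq> H" "a \<in> H"
  shows "{b \<otimes> a [^] (j::nat) | b j. b \<in> B} \<subseteq> H"
proof
  fix x assume "x \<in> {b \<otimes> a [^] (j::nat) | b j. b \<in> B}"
  then obtain b j where "b \<in> B" "x = b \<otimes> a [^] (j::nat)" by blast
  then show "x \<in> H"
    using assms(2) subgroup.m_closed[OF assms(1)] subgroup_nat_pow_closed[OF assms(1,3), of j] by blast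
qed

lemma card_subgroups_containing:
  assumes q: "Factorial_Ring.prime q" and A: "group A" "finite (carrier A)"
    and exp: "\<forall>a\<in>carrier A. a [^]\<^bsub>A\<^esub> q = \<one>\<^bsub>A\<^esub>"
    and B: "subgroup B A" "card B = q" "B \<subseteq> group_center A"
    and As: "bij_betw As {1..q+1} {S. subgroup S A \<and> card S = q ^ 2 \<and> B \<subseteq> S}"
    and a: "a \<in> carrier A"
  shows "card {i\<in>{1..q+1}. a \<in> As i} = (if a \<in> B then q + 1 else 1)"
proof -
  interpret A: group A by fact
  have As_props: "subgroup (As i) A \<and> card (As i) = q ^ 2 \<and> B \<subseteq> As i" if "i \<in> {1..q+1}" for i
    using bij_betwE[OF As] that by blast
  show ?thesis
  proof (cases "a \<in> B")
    case True
    then have "{i\<in>{1..q+1}. a \<in> As i} = {1..q+1}" using As_props by blast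
    then show ?thesis using True by simp
  next
    case False
    define S where "S = {b \<otimes>\<^bsub>A\<^esub> a [^]\<^bsub>A\<^esub> (j::nat) | b j. b \<in> B}"
    have "finite B" using B(1) A(2) subgroup.subset finite_subset by blast
    then have S: "subgroup S A" "card S = q ^ 2" "B \<subseteq> S" "a \<in> S"
      unfolding S_def using A.central_cyclic_product_subgroup[OF B(1,3) a exp[rule_format, OF a]]
        A.card_central_cyclic_product[OF q B(1) _ a exp[rule_format, OF a] False] B(2)
        prime_gt_0_nat[OF q] A.central_cyclic_product_contains[OF B(1) a]
      by (simp_all add: power2_eq_square)
    then have "S \<in> As ` {1..q+1}" using bij_betw_imp_surj_on[OF As] by blast
    then obtain i where i: "i \<in> {1..q+1}" "As i = S" by blast
    have "k = i" if k: "k \<in> {1..q+1}" "a \<in> As k" for k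
    proof -
      have "S \<subseteq> As k"
        unfolding S_def using A.central_cyclic_product_least As_props[OF k(1)] k(2) by blast
      then have "S = As k"
        using As_props[OF k(1)] S(2) finite_subset[OF subgroup.subset A(2)] by (intro card_subset_eq) auto
      then have "As k = As i" using i(2) by simp
      then show ?thesis
        using inj_onD[OF bij_betw_imp_inj_on[OF As]] k(1) i(1) by blast
    qed
    then have "{k\<in>{1..q+1}. a \<in> As k} = {i}"
      using i S(4) by blast
    then show ?thesis using False by simp
  qed
qed

section \<open>Quotients, commutator subgroups and central series\<close>

lemma (in normal) comm_group_FactGroup:
  assumes "\<forall>x\<in>carrier G. \<forall>y\<in>carrier G. commutator G x y \<in> H"
  shows "comm_group (G Mod H)"
proof (rule group.group_comm_groupI[OF factorgroup_is_group])
  fix U V assume "U \<in> carrier (G Mod H)" "V \<in> carrier (G Mod H)"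
  then obtain x y where xy: "x \<in> carrier G" "y \<in> carrier G" "U = H #> x" "V = H #> y"
    unfolding carrier_FactGroup by blast
  have "(x \<otimes> y) \<otimes> inv (y \<otimes> x) \<in> H"
    using assms xy by (simp add: inv_mult_group m_assoc)
  then have "H #> (y \<otimes> x) = H #> (x \<otimes> y)"
    using xy by (intro repr_independence rcos_module_rev) (auto intro: subgroup_axioms)
  then show "U \<otimes>\<^bsub>G Mod H\<^esub> V = V \<otimes>\<^bsub>G Mod H\<^esub> U"
    using xy by (simp add: rcos_sum)
qed

lemma (in normal) order_FactGroup_dvd: "order (G Mod H) dvd order G"
  using lagrange[OF subgroup_axioms] unfolding order_def FactGroup_def by (metis dvd_triv_left partial_object.select_convs(1))

lemma (in normal) order_FactGroup_p_power:
  assumes "finite (carrier G)" "order G = p ^ k" "Factorial_Ring.prime p" "H \<noteq> carrier G"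
  shows "\<exists>i>0. order (G Mod H) = p ^ i"
proof -
  have order: "order (G Mod H) * card H = order G"
    using lagrange[OF subgroup_axioms] unfolding order_def FactGroup_def by simp
  then have "order (G Mod H) dvd p ^ k" using assms(2) by (metis dvd_triv_left)
  then obtain i where i: "order (G Mod H) = p ^ i" using divides_primepow_nat[OF assms(3)] by blast
  have "i \<noteq> 0"
  proof
    assume "i = 0"
    then have "card H = card (carrier G)" using i order unfolding order_def by simp
    then show False using card_subset_eq[OF assms(1) subset] assms(4) by simp
  qed
  then show ?thesis using i by blast
qed

lemma (in normal) commutators_of_central_rcos:
  assumes x: "x \<in> carrier G"
    and central: "\<forall>Y\<in>carrier (G Mod H). (H #> x) \<otimes>\<^bsub>G Mod H\<^esub> Y = Y \<otimes>\<^bsub>G Mod H\<^esub> (H #> x)"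
  shows "\<forall>y\<in>carrier G. commutator G x y \<in> H"
proof
  fix y assume y: "y \<in> carrier G"
  have "H #> (x \<otimes> y) = H #> (y \<otimes> x)"
    using central x y rcos_sum unfolding carrier_FactGroup by auto
  then have "x \<otimes> y \<in> H #> (y \<otimes> x)" using rcos_self[OF _ subgroup_axioms] x y by (metis m_closed)
  then have "(x \<otimes> y) \<otimes> inv (y \<otimes> x) \<in> H" using rcos_module_imp[OF is_group] x y by simp
  then show "commutator G x y \<in> H" using x y by (simp add: m_assoc inv_mult_group)
qed

lemma (in normal) finprod_FactGroup_rcos:
  assumes "comm_group (G Mod H)" "distinct js" "\<forall>j\<in>set js. z j \<in> carrier G"
  shows "finprod (G Mod H) (\<lambda>j. H #> z j) (set js) = H #> mult_list G (map z js)"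
proof -
  interpret V: comm_group "G Mod H" by fact
  show ?thesis
    using assms(2,3)
  proof (induct js)
    case Nil
    then show ?case by (simp add: coset_mult_one subset)
  next
    case (Cons j js)
    have closed: "mult_list G (map z js) \<in> carrier G"
      using Cons.prems by (auto intro!: mult_list_closed[OF subgroup_self])
    have "(\<lambda>j. H #> z j) \<in> set (j # js) \<rightarrow> carrier (G Mod H)"
      using Cons.prems unfolding carrier_FactGroup by auto
    then show ?case
      using Cons closed by (simp add: rcos_sum)
  qed
qed

lemma (in group) rcos_eq_imp_right_factor:
  assumes M: "subgroup M G" and N: "subgroup N G"
    and N_normal: "\<forall>m\<in>M. \<forall>n\<in>N. m \<otimes> n \<otimes> inv m \<in> N"
    and yw: "y \<in> carrier G" "w \<in> M" "N #> y = N #> w"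
  shows "\<exists>n\<in>N. y = w \<otimes> n"
proof -
  have w: "w \<in> carrier G" using yw(2) M subgroup.subset by blast
  have "y \<in> N #> w" using yw rcos_self[OF yw(1) N] by simp
  then obtain n where n: "n \<in> N" "y = n \<otimes> w" unfolding r_coset_def by blast
  have "inv w \<otimes> n \<otimes> inv (inv w) \<in> N"
    using N_normal subgroup.m_inv_closed[OF M yw(2)] n(1) by blast
  moreover have "y = w \<otimes> (inv w \<otimes> n \<otimes> inv (inv w))"
    using n w subgroup.mem_carrier[OF N n(1)] by (simp add: m_assoc)
  ultimately show ?thesis by blast
qed

lemma (in group) normal_restrict:
  assumes M: "subgroup M G" and N: "subgroup N G" "N \<subseteq> M"
    and N_normal: "\<forall>m\<in>M. \<forall>n\<in>N. m \<otimes> n \<otimes> inv m \<in> N"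
  shows "N \<lhd> G\<lparr>carrier := M\<rparr>"
  using N_normal m_inv_consistent[OF M]
  by (auto simp: group.normal_inv_iff[OF subgroup_imp_group[OF M]] intro: subgroup_incl[OF N(1) M N(2)])

lemma (in group) generate_image_subset:
  assumes f: "group_hom G G f" and S: "S \<subseteq> carrier G" "f ` S \<subseteq> S"
  shows "f ` generate G S \<subseteq> generate G S"
  using group_hom.generate_img[OF f S(1)] mono_generate[OF S(2)] by simp

lemma (in group) conjugation_group_hom:
  assumes "h \<in> carrier G"
  shows "group_hom G G (\<lambda>x. h \<otimes> x \<otimes> inv h)"
proof -
  have "h \<otimes> (x \<otimes> y) \<otimes> inv h = h \<otimes> x \<otimes> inv h \<otimes> (h \<otimes> y \<otimes> inv h)"
    if "x \<in> carrier G" "y \<in> carrier G" for x y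
    using assms that by (simp add: m_assoc)
  then show ?thesis
    using assms by (intro group_hom.intro group_hom_axioms.intro is_group homI) auto
qed

lemma (in group) conjugate_commutator:
  assumes "h \<in> carrier G" "x \<in> carrier G" "y \<in> carrier G"
  shows "h \<otimes> commutator G x y \<otimes> inv h
    = commutator G (h \<otimes> x \<otimes> inv h) (h \<otimes> y \<otimes> inv h)"
  using assms by (simp add: m_assoc inv_mult_group)

lemma (in group) commutator_in_comm_subgroup:
  "k \<in> K \<Longrightarrow> h \<in> H \<Longrightarrow> commutator G k h \<in> comm_subgroup G K H"
  unfolding comm_subgroup_def by (rule generate.incl) blast

lemma (in group) comm_subgroup_is_subgroup:
  assumes "K \<subseteq> carrier G" "H \<subseteq> carrier G"
  shows "subgroup (comm_subgroup G K H) G"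
  unfolding comm_subgroup_def using assms by (intro generate_is_subgroup) (auto simp: subset_iff)

lemma (in group) comm_subgroup_subset:
  assumes K: "subgroup K G" and H: "H \<subseteq> carrier G"
    and K_normal: "\<forall>h\<in>H. \<forall>k\<in>K. h \<otimes> k \<otimes> inv h \<in> K"
  shows "comm_subgroup G K H \<subseteq> K"
  unfolding comm_subgroup_def
proof (intro generate_subgroup_incl[OF _ K] subsetI)
  fix c assume "c \<in> (\<Union>k\<in>K. \<Union>h\<in>H. {commutator G k h})"
  then obtain k h where kh: "k \<in> K" "h \<in> H" "c = commutator G k h" by blast
  have "h \<otimes> inv k \<otimes> inv h \<in> K"
    using K_normal kh subgroup.m_inv_closed[OF K] by blast
  then have "k \<otimes> (h \<otimes> inv k \<otimes> inv h) \<in> K"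
    using subgroup.m_closed[OF K kh(1)] by blast
  then show "c \<in> K"
    using kh H subgroup.mem_carrier[OF K] by (simp add: m_assoc subset_iff)
qed

lemma (in group) comm_subgroup_normal:
  assumes H: "subgroup H G" and KH: "K \<subseteq> H"
    and K_normal: "\<forall>h\<in>H. \<forall>k\<in>K. h \<otimes> k \<otimes> inv h \<in> K"
    and h: "h \<in> H"
  shows "(\<lambda>x. h \<otimes> x \<otimes> inv h) ` comm_subgroup G K H \<subseteq> comm_subgroup G K H"
  unfolding comm_subgroup_def
proof (rule generate_image_subset[OF conjugation_group_hom])
  have H_carrier: "H \<subseteq> carrier G" using H subgroup.subset by blast
  show "h \<in> carrier G" using h H_carrier by blast
  show "(\<Union>k\<in>K. \<Union>x\<in>H. {commutator G k x}) \<subseteq> carrier G"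
    using KH H_carrier by blast
  show "(\<lambda>x. h \<otimes> x \<otimes> inv h) ` (\<Union>k\<in>K. \<Union>x\<in>H. {commutator G k x}) \<subseteq> (\<Union>k\<in>K. \<Union>x\<in>H. {commutator G k x})"
  proof
    fix c assume "c \<in> (\<lambda>x. h \<otimes> x \<otimes> inv h) ` (\<Union>k\<in>K. \<Union>x\<in>H. {commutator G k x})"
    then obtain k x where kx: "k \<in> K" "x \<in> H" and c: "c = h \<otimes> commutator G k x \<otimes> inv h" by blast
    have "h \<otimes> x \<otimes> inv h \<in> H"
      using h kx(2) subgroup.m_closed[OF H] subgroup.m_inv_closed[OF H] by blast
    moreover have "h \<otimes> k \<otimes> inv h \<in> K" using K_normal h kx(1) by blast
    moreover have "h \<otimes> commutator G k x \<otimes> inv h = commutator G (h \<otimes> k \<otimes> inv h) (h \<otimes> x \<otimes> inv h)"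
      using h kx KH H_carrier by (intro conjugate_commutator) auto
    ultimately show "c \<in> (\<Union>k\<in>K. \<Union>x\<in>H. {commutator G k x})"
      unfolding c by blast
  qed
qed

lemma (in group) lower_central_normal:
  assumes H: "subgroup H G"
  shows "subgroup (lower_central G H n) G \<and> lower_central G H n \<subseteq> H
    \<and> (\<forall>h\<in>H. \<forall>k\<in>lower_central G H n. h \<otimes> k \<otimes> inv h \<in> lower_central G H n)"
proof (induct n)
  case 0
  then show ?case
    using H subgroup.m_closed[OF H] subgroup.m_inv_closed[OF H] by simp
next
  case (Suc n)
  then have IH: "subgroup (lower_central G H n) G" "lower_central G H n \<subseteq> H"
    "\<forall>h\<in>H. \<forall>k\<in>lower_central G H n. h \<otimes> k \<otimes> inv h \<in> lower_central G H n"
    by auto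
  have H_carrier: "H \<subseteq> carrier G" using H subgroup.subset by blast
  show ?case
    using comm_subgroup_is_subgroup[OF subgroup.subset[OF IH(1)] H_carrier]
      comm_subgroup_subset[OF IH(1) H_carrier IH(3)] IH(2)
      comm_subgroup_normal[OF H IH(2,3)]
    by (auto simp: image_subset_iff)
qed

text \<open>The preimage in \<open>P\<close> of the centre of \<open>P/N\<close>.\<close>
definition center_mod :: "('a, 'b) monoid_scheme \<Rightarrow> 'a set \<Rightarrow> 'a set \<Rightarrow> 'a set" where
  "center_mod G P N = {x \<in> P. \<forall>y\<in>P. commutator G x y \<in> N}"

context group
begin

lemma center_mod_subgroup:
  assumes P: "subgroup P G" and N: "subgroup N G"
    and N_normal: "\<forall>h\<in>P. \<forall>n\<in>N. h \<otimes> n \<otimes> inv h \<in> N"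
  shows "subgroup (center_mod G P N) G"
proof (rule subgroupI)
  have P_carrier: "P \<subseteq> carrier G" using P subgroup.subset by blast
  then show "center_mod G P N \<subseteq> carrier G" unfolding center_mod_def by blast
  have "\<one> \<in> center_mod G P N"
    unfolding center_mod_def using P_carrier subgroup.one_closed[OF P] subgroup.one_closed[OF N]
    by (auto simp: subset_iff)
  then show "center_mod G P N \<noteq> {}" by blast
next
  fix x assume x: "x \<in> center_mod G P N"
  have xP: "x \<in> P" "x \<in> carrier G" using x subgroup.mem_carrier[OF P] unfolding center_mod_def by auto
  have "commutator G (inv x) y \<in> N" if y: "y \<in> P" for y
  proof -
    have yG: "y \<in> carrier G" using y subgroup.mem_carrier[OF P] by blast
    have "inv x \<otimes> inv (commutator G x y) \<otimes> inv (inv x) \<in> N"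
      using N_normal x y subgroup.m_inv_closed[OF P xP(1)] subgroup.m_inv_closed[OF N]
      unfolding center_mod_def by blast
    then show ?thesis using xP yG by (simp add: m_assoc inv_mult_group)
  qed
  then show "inv x \<in> center_mod G P N"
    unfolding center_mod_def using subgroup.m_inv_closed[OF P xP(1)] by blast
next
  fix x1 x2 assume x: "x1 \<in> center_mod G P N" "x2 \<in> center_mod G P N"
  have xP: "x1 \<in> P" "x2 \<in> P" "x1 \<in> carrier G" "x2 \<in> carrier G"
    using x subgroup.mem_carrier[OF P] unfolding center_mod_def by auto
  have "commutator G (x1 \<otimes> x2) y \<in> N" if y: "y \<in> P" for y
  proof -
    have yG: "y \<in> carrier G" using y subgroup.mem_carrier[OF P] by blast
    have "x1 \<otimes> commutator G x2 y \<otimes> inv x1 \<otimes> commutator G x1 y \<in> N"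
      using N_normal x y xP subgroup.m_closed[OF N] unfolding center_mod_def by blast
    then show ?thesis using xP yG by (simp add: m_assoc inv_mult_group)
  qed
  then show "x1 \<otimes> x2 \<in> center_mod G P N"
    unfolding center_mod_def using subgroup.m_closed[OF P xP(1,2)] by blast
qed

lemma subset_center_mod:
  assumes P: "subgroup P G" and N: "subgroup N G" "N \<subseteq> P"
    and N_normal: "\<forall>h\<in>P. \<forall>n\<in>N. h \<otimes> n \<otimes> inv h \<in> N"
  shows "N \<subseteq> center_mod G P N"
proof
  fix n assume n: "n \<in> N"
  have "commutator G n y \<in> N" if y: "y \<in> P" for y
  proof -
    have "y \<otimes> inv n \<otimes> inv y \<in> N"
      using N_normal y subgroup.m_inv_closed[OF N(1) n] by blast
    then have "n \<otimes> (y \<otimes> inv n \<otimes> inv y) \<in> N" using subgroup.m_closed[OF N(1) n] by blast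
    then show ?thesis
      using n y N(2) subgroup.mem_carrier[OF P] by (simp add: m_assoc subset_iff)
  qed
  then show "n \<in> center_mod G P N" unfolding center_mod_def using n N(2) by blast
qed

lemma center_mod_normal:
  assumes P: "subgroup P G" and N_normal: "\<forall>h\<in>P. \<forall>n\<in>N. h \<otimes> n \<otimes> inv h \<in> N"
  shows "\<forall>h\<in>P. \<forall>x\<in>center_mod G P N. h \<otimes> x \<otimes> inv h \<in> center_mod G P N"
proof (intro ballI)
  fix h x assume h: "h \<in> P" and x: "x \<in> center_mod G P N"
  have hx: "h \<in> carrier G" "x \<in> P" "x \<in> carrier G" "inv h \<in> P"
    using h x subgroup.mem_carrier[OF P] subgroup.m_inv_closed[OF P] unfolding center_mod_def by auto
  have "commutator G (h \<otimes> x \<otimes> inv h) y \<in> N" if y: "y \<in> P" for y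
  proof -
    have y': "inv h \<otimes> y \<otimes> h \<in> P"
      using y h hx(4) subgroup.m_closed[OF P] by blast
    then have "h \<otimes> commutator G x (inv h \<otimes> y \<otimes> h) \<otimes> inv h \<in> N"
      using N_normal h x unfolding center_mod_def by blast
    then show ?thesis
      using hx y subgroup.mem_carrier[OF P] by (simp add: m_assoc inv_mult_group)
  qed
  moreover have "h \<otimes> x \<otimes> inv h \<in> P"
    using h hx subgroup.m_closed[OF P] by blast
  ultimately show "h \<otimes> x \<otimes> inv h \<in> center_mod G P N" unfolding center_mod_def by blast
qed

lemma center_mod_grows:
  assumes fin: "finite (carrier G)" and P: "subgroup P G" "card P = p ^ k"
    and p: "Factorial_Ring.prime p" and N: "subgroup N G" "N \<subseteq> P"
    and N_normal: "\<forall>h\<in>P. \<forall>n\<in>N. h \<otimes> n \<otimes> inv h \<in> N" and proper: "N \<noteq> P"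
  shows "\<exists>x\<in>center_mod G P N. x \<notin> N"
proof -
  interpret N: normal N "G\<lparr>carrier := P\<rparr>" by (rule normal_restrict[OF P(1) N N_normal])
  define K where "K = G\<lparr>carrier := P\<rparr> Mod N"
  interpret K: group K unfolding K_def by (rule N.factorgroup_is_group)
  have fin_P: "finite P" using fin P(1) subgroup.subset finite_subset by blast
  have carrier_K: "carrier K = (\<lambda>x. N #> x) ` P"
    unfolding K_def carrier_FactGroup by simp
  obtain i where "i > 0" "order K = p ^ i"
    using N.order_FactGroup_p_power[OF _ _ p] fin_P P(2) proper unfolding K_def order_def by auto
  moreover have "finite (carrier K)" unfolding carrier_K using fin_P by simp
  ultimately obtain z where z: "z \<in> carrier K" "z \<noteq> \<one>\<^bsub>K\<^esub>"
    and central: "\<forall>y\<in>carrier K. z \<otimes>\<^bsub>K\<^esub> y = y \<otimes>\<^bsub>K\<^esub> z"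
    using K.p_group_center_nontrivial[OF _ _ _ p] by blast
  obtain x where x: "x \<in> P" "z = N #> x" using z(1) carrier_K by blast
  have "x \<notin> N"
  proof
    assume "x \<in> N"
    then have "N #> x = N" by (rule subgroup.rcos_const[OF N(1) is_group])
    then show False using z(2) x(2) unfolding K_def by simp
  qed
  moreover have "\<forall>y\<in>P. commutator G x y \<in> N"
    using N.commutators_of_central_rcos[of x] central x m_inv_consistent[OF P(1)]
    unfolding K_def by simp
  ultimately show ?thesis unfolding center_mod_def using x(1) by blast
qed

end

section \<open>The coprime action\<close>

locale coprime_action =
  fixes A :: "('c, 'd) monoid_scheme" and G :: "('a, 'b) monoid_scheme"
    and \<alpha> :: "'c \<Rightarrow> 'a \<Rightarrow> 'a" and q :: nat and B :: "'c set" and As :: "nat \<Rightarrow> 'c set"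
  assumes q: "Factorial_Ring.prime q"
    and A: "group A" and fin_A: "finite (carrier A)"
    and exponent: "\<forall>a \<in> carrier A. a [^]\<^bsub>A\<^esub> q = \<one>\<^bsub>A\<^esub>"
    and B: "subgroup B A" and card_B: "card B = q" and B_central: "B \<subseteq> group_center A"
    and G: "group G" and fin_G: "finite (carrier G)" and coprime_G: "coprime (order G) q"
    and act: "acts_by_automorphisms A G \<alpha>"
    and As: "bij_betw As {1..q+1} {S. subgroup S A \<and> card S = q ^ 2 \<and> B \<subseteq> S}"
begin

sublocale A: group A by (rule A)
sublocale G: group G by (rule G)

lemma A_action: "group_action A (carrier G) \<alpha>"
  using act unfolding acts_by_automorphisms_def by blast

lemma \<alpha>_group_hom: "a \<in> carrier A \<Longrightarrow> group_hom G G (\<alpha> a)"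
  using act G unfolding acts_by_automorphisms_def by (simp add: group_hom_def group_hom_axioms_def)

lemma \<alpha>_closed: "a \<in> carrier A \<Longrightarrow> x \<in> carrier G \<Longrightarrow> \<alpha> a x \<in> carrier G"
  using group_hom.hom_closed[OF \<alpha>_group_hom] by blast

lemma \<alpha>_mult: "a \<in> carrier A \<Longrightarrow> x \<in> carrier G \<Longrightarrow> y \<in> carrier G \<Longrightarrow>
    \<alpha> a (x \<otimes>\<^bsub>G\<^esub> y) = \<alpha> a x \<otimes>\<^bsub>G\<^esub> \<alpha> a y"
  using group_hom.hom_mult[OF \<alpha>_group_hom] by blast

lemma \<alpha>_inv: "a \<in> carrier A \<Longrightarrow> x \<in> carrier G \<Longrightarrow> \<alpha> a (inv\<^bsub>G\<^esub> x) = inv\<^bsub>G\<^esub> (\<alpha> a x)"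
  using group_hom.hom_inv[OF \<alpha>_group_hom] by blast

lemma \<alpha>_one: "a \<in> carrier A \<Longrightarrow> \<alpha> a \<one>\<^bsub>G\<^esub> = \<one>\<^bsub>G\<^esub>"
  using group_hom.hom_one[OF \<alpha>_group_hom] by blast

lemma \<alpha>_compose: "a \<in> carrier A \<Longrightarrow> b \<in> carrier A \<Longrightarrow> x \<in> carrier G \<Longrightarrow>
    \<alpha> (a \<otimes>\<^bsub>A\<^esub> b) x = \<alpha> a (\<alpha> b x)"
  using group_action.composition_rule[OF A_action] by blast

lemma \<alpha>_image_eq:
  assumes "a \<in> carrier A" "S \<subseteq> carrier G" "\<alpha> a ` S \<subseteq> S"
  shows "\<alpha> a ` S = S"
proof -
  have "inj_on (\<alpha> a) S"
    using group_action.inj_prop[OF A_action assms(1)] assms(2) inj_on_subset by blast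
  then show ?thesis
    using assms(2,3) fin_G finite_subset endo_inj_surj by blast
qed

lemma As_props: "i \<in> {1..q+1} \<Longrightarrow> subgroup (As i) A \<and> card (As i) = q ^ 2 \<and> B \<subseteq> As i"
  using bij_betwE[OF As] by blast

lemma card_As_containing:
  "a \<in> carrier A \<Longrightarrow> card {i\<in>{1..q+1}. a \<in> As i} = (if a \<in> B then q + 1 else 1)"
  using card_subgroups_containing[OF q A fin_A exponent B card_B B_central As] by blast

lemma coprime_card_subgroup:
  assumes "subgroup H G"
  shows "coprime (card H) q"
proof -
  have "coprime (card (rcosets\<^bsub>G\<^esub> H) * card H) q"
    using G.lagrange[OF assms] coprime_G by simp
  then show ?thesis by simp
qed

lemma fixed_points_subgroup:
  assumes F: "F \<subseteq> carrier A" and H: "subgroup H G"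
  shows "subgroup (fixed_points \<alpha> F H) G"
proof (rule G.subgroupI)
  have H_carrier: "H \<subseteq> carrier G" using H subgroup.subset by blast
  then show "fixed_points \<alpha> F H \<subseteq> carrier G" unfolding fixed_points_def by auto
  have "\<one>\<^bsub>G\<^esub> \<in> fixed_points \<alpha> F H"
    using F subgroup.one_closed[OF H] \<alpha>_one unfolding fixed_points_def by blast
  then show "fixed_points \<alpha> F H \<noteq> {}" by blast
  fix x y assume x: "x \<in> fixed_points \<alpha> F H" and y: "y \<in> fixed_points \<alpha> F H"
  have xy: "x \<in> H" "y \<in> H" "x \<in> carrier G" "y \<in> carrier G"
    using x y H_carrier unfolding fixed_points_def by auto
  have "\<alpha> a (inv\<^bsub>G\<^esub> x) = inv\<^bsub>G\<^esub> x" "\<alpha> a (x \<otimes>\<^bsub>G\<^esub> y) = x \<otimes>\<^bsub>G\<^esub> y" if "a \<in> F" for a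
    using that x y xy F \<alpha>_inv \<alpha>_mult unfolding fixed_points_def by auto
  then show "inv\<^bsub>G\<^esub> x \<in> fixed_points \<alpha> F H" "x \<otimes>\<^bsub>G\<^esub> y \<in> fixed_points \<alpha> F H"
    using xy subgroup.m_inv_closed[OF H] subgroup.m_closed[OF H] unfolding fixed_points_def by auto
qed

lemma fixed_points_B_invariant:
  assumes "\<forall>a\<in>carrier A. \<alpha> a ` H \<subseteq> H" "H \<subseteq> carrier G"
  shows "\<forall>a\<in>carrier A. \<alpha> a ` fixed_points \<alpha> B H \<subseteq> fixed_points \<alpha> B H"
proof (intro ballI image_subsetI)
  fix a x assume a: "a \<in> carrier A" and x: "x \<in> fixed_points \<alpha> B H"
  have "\<alpha> b (\<alpha> a x) = \<alpha> a x" if b: "b \<in> B" for b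
  proof -
    have "b \<in> carrier A" "b \<otimes>\<^bsub>A\<^esub> a = a \<otimes>\<^bsub>A\<^esub> b"
      using B_central b a unfolding group_center_def by auto
    moreover have "x \<in> carrier G" "\<alpha> b x = x"
      using x b assms(2) unfolding fixed_points_def by auto
    ultimately show ?thesis
      using a \<alpha>_compose by metis
  qed
  then show "\<alpha> a x \<in> fixed_points \<alpha> B H"
    using assms(1) a x unfolding fixed_points_def by blast
qed

lemma fixed_points_As_subset:
  "i \<in> {1..q+1} \<Longrightarrow> fixed_points \<alpha> (As i) H \<subseteq> fixed_points \<alpha> B H"
  using As_props unfolding fixed_points_def by blast

text \<open>The coset has \<open>|N|\<close> elements, a number prime to \<open>q\<close>, so the \<open>q\<close>-group \<open>F\<close> fixes one.\<close>
lemma fixed_point_in_coset: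
  assumes N: "subgroup N G" and F: "subgroup F A" "card F = q ^ k"
    and y: "y \<in> carrier G" and invariant: "\<forall>a\<in>F. \<alpha> a ` (N #>\<^bsub>G\<^esub> y) \<subseteq> N #>\<^bsub>G\<^esub> y"
  shows "\<exists>z\<in>N #>\<^bsub>G\<^esub> y. \<forall>a\<in>F. \<alpha> a z = z"
proof -
  interpret F_action: group_action "A\<lparr>carrier := F\<rparr>" "carrier G" \<alpha>
    using group_action.induced_action[OF A_action F(1)] .
  have N_carrier: "N \<subseteq> carrier G" using N subgroup.subset by blast
  have "\<not> q dvd card N"
  proof
    assume "q dvd card N"
    then have "is_unit q" by (rule coprime_common_divisor[OF coprime_card_subgroup[OF N] _ dvd_refl])
    then show False using q not_prime_unit by blast
  qed
  moreover have "card (N #>\<^bsub>G\<^esub> y) = card N"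
    using G.card_rcosets_equal[OF G.rcosetsI[OF N_carrier y] N_carrier] by simp
  ultimately have "\<not> q dvd card (N #>\<^bsub>G\<^esub> y)" by simp
  moreover have "finite (N #>\<^bsub>G\<^esub> y)"
    using G.r_coset_subset_G[OF N_carrier y] fin_G finite_subset by blast
  moreover have "order (A\<lparr>carrier := F\<rparr>) = q ^ k"
    using F(2) unfolding order_def by simp
  ultimately have "\<exists>z\<in>N #>\<^bsub>G\<^esub> y. \<forall>a\<in>carrier (A\<lparr>carrier := F\<rparr>). \<alpha> a z = z"
    using invariant G.r_coset_subset_G[OF N_carrier y]
    by (intro F_action.fixed_point_exists[OF _ q]) auto
  then show ?thesis by simp
qed

lemma coset_image:
  assumes N: "subgroup N G" "\<forall>a\<in>carrier A. \<alpha> a ` N \<subseteq> N"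
    and a: "a \<in> carrier A" and m: "m \<in> carrier G"
  shows "\<alpha> a ` (N #>\<^bsub>G\<^esub> m) = N #>\<^bsub>G\<^esub> \<alpha> a m"
proof -
  have N_carrier: "N \<subseteq> carrier G" using N(1) subgroup.subset by blast
  have rcos: "N #>\<^bsub>G\<^esub> x = (\<lambda>n. n \<otimes>\<^bsub>G\<^esub> x) ` N" for x
    unfolding r_coset_def by auto
  have "\<alpha> a ` (N #>\<^bsub>G\<^esub> m) = (\<lambda>n. \<alpha> a n \<otimes>\<^bsub>G\<^esub> \<alpha> a m) ` N"
    unfolding rcos image_image using \<alpha>_mult[OF a _ m] N_carrier by (intro image_cong) auto
  also have "\<dots> = (\<lambda>n. n \<otimes>\<^bsub>G\<^esub> \<alpha> a m) ` (\<alpha> a ` N)" by (simp add: image_image)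
  also have "\<alpha> a ` N = N" using \<alpha>_image_eq[OF a N_carrier] N(2) a by blast
  finally show ?thesis unfolding rcos .
qed

text \<open>\<open>factors_modulo U U\<close> holds trivially; the theorem is the case \<open>K = {\<one>}\<close>.\<close>
definition factors_modulo :: "'a set \<Rightarrow> 'a set \<Rightarrow> bool" where
  "factors_modulo U K \<longleftrightarrow> (\<forall>y\<in>fixed_points \<alpha> B U. \<exists>c. \<exists>k\<in>K.
      (\<forall>i\<in>{1..q+1}. c i \<in> fixed_points \<alpha> (As i) U) \<and> y = mult_list G (map c [1..<q+2]) \<otimes>\<^bsub>G\<^esub> k)"

lemma mult_list_fixed_points:
  assumes U: "subgroup U G" and c: "\<forall>i\<in>{1..q+1}. c i \<in> fixed_points \<alpha> (As i) U"
  shows "mult_list G (map c [1..<q+2]) \<in> fixed_points \<alpha> B U"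
proof (rule mult_list_closed[OF fixed_points_subgroup[OF subgroup.subset[OF B] U]])
  show "set (map c [1..<q+2]) \<subseteq> fixed_points \<alpha> B U"
    using c fixed_points_As_subset by fastforce
qed

lemma factors_modulo_self:
  assumes U: "subgroup U G"
  shows "factors_modulo U U"
  unfolding factors_modulo_def
proof
  fix y assume y: "y \<in> fixed_points \<alpha> B U"
  have one: "mult_list G (map (\<lambda>_. \<one>\<^bsub>G\<^esub>) js) = \<one>\<^bsub>G\<^esub>" for js :: "nat list"
    by (induct js) auto
  show "\<exists>c. \<exists>k\<in>U. (\<forall>i\<in>{1..q+1}. c i \<in> fixed_points \<alpha> (As i) U)
      \<and> y = mult_list G (map c [1..<q+2]) \<otimes>\<^bsub>G\<^esub> k"
  proof (intro exI[of _ "\<lambda>_. \<one>\<^bsub>G\<^esub>"] bexI[of _ y] conjI ballI)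
    show "y \<in> U" using y unfolding fixed_points_def by blast
    then show "y = mult_list G (map (\<lambda>_. \<one>\<^bsub>G\<^esub>) [1..<q+2]) \<otimes>\<^bsub>G\<^esub> y"
      using subgroup.mem_carrier[OF U] by (simp add: one del: upt_Suc)
    fix i assume "i \<in> {1..q+1}"
    then show "\<one>\<^bsub>G\<^esub> \<in> fixed_points \<alpha> (As i) U"
      using subgroup.one_closed[OF U] \<alpha>_one subgroup.subset[OF conjunct1[OF As_props]]
      unfolding fixed_points_def by blast
  qed
qed

lemma factors_modulo_trivial:
  assumes U: "subgroup U G" and factors: "factors_modulo U {\<one>\<^bsub>G\<^esub>}"
  shows "fixed_points \<alpha> B U = set_prod_list G (map (\<lambda>i. fixed_points \<alpha> (As i) U) [1..<q+2])"
proof -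
  have "set [1..<q+2] = {1..q+1}" by auto
  then have prod: "set_prod_list G (map (\<lambda>i. fixed_points \<alpha> (As i) U) [1..<q+2])
      = {mult_list G (map c [1..<q+2]) | c. \<forall>i\<in>{1..q+1}. c i \<in> fixed_points \<alpha> (As i) U}"
    by (simp add: set_prod_list_map del: upt_Suc)
  show ?thesis
  proof (unfold prod, intro equalityI subsetI)
    fix y assume y: "y \<in> fixed_points \<alpha> B U"
    then obtain c where c: "\<forall>i\<in>{1..q+1}. c i \<in> fixed_points \<alpha> (As i) U"
      and "y = mult_list G (map c [1..<q+2]) \<otimes>\<^bsub>G\<^esub> \<one>\<^bsub>G\<^esub>"
      using factors unfolding factors_modulo_def by blast
    moreover have "mult_list G (map c [1..<q+2]) \<in> carrier G"
      using mult_list_fixed_points[OF U c] U subgroup.subset unfolding fixed_points_def by blast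
    ultimately show "y \<in> {mult_list G (map c [1..<q+2]) | c. \<forall>i\<in>{1..q+1}. c i \<in> fixed_points \<alpha> (As i) U}"
      by auto
  qed (use mult_list_fixed_points[OF U] in blast)
qed

end

section \<open>Abelian sections\<close>

locale abelian_section = coprime_action A G \<alpha> q B As
  for A :: "('c, 'd) monoid_scheme" and G :: "('a, 'b) monoid_scheme" and \<alpha> q B As +
  fixes M N :: "'a set"
  assumes M: "subgroup M G" and N: "subgroup N G" "N \<subseteq> M"
    and N_normal: "\<forall>m\<in>M. \<forall>n\<in>N. m \<otimes>\<^bsub>G\<^esub> n \<otimes>\<^bsub>G\<^esub> inv\<^bsub>G\<^esub> m \<in> N"
    and commutators: "\<forall>x\<in>M. \<forall>y\<in>M. commutator G x y \<in> N"
    and M_invariant: "\<forall>a\<in>carrier A. \<alpha> a ` M \<subseteq> M"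
    and N_invariant: "\<forall>a\<in>carrier A. \<alpha> a ` N \<subseteq> N"
    and B_trivial: "\<forall>b\<in>B. \<forall>x\<in>M. \<alpha> b x = x"
begin

abbreviation V where "V \<equiv> G\<lparr>carrier := M\<rparr> Mod N"

definition \<beta> :: "'c \<Rightarrow> 'a set \<Rightarrow> 'a set" where "\<beta> a U = \<alpha> a ` U"

lemma M_carrier: "M \<subseteq> carrier G"
  using M subgroup.subset by blast

sublocale M: group "G\<lparr>carrier := M\<rparr>"
  by (rule G.subgroup_imp_group[OF M])

sublocale N: normal N "G\<lparr>carrier := M\<rparr>"
  by (rule G.normal_restrict[OF M N N_normal])

lemma carrier_V: "carrier V = (\<lambda>m. N #>\<^bsub>G\<^esub> m) ` M"
  unfolding carrier_FactGroup by simp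

lemma rcos_sum: "m1 \<in> M \<Longrightarrow> m2 \<in> M \<Longrightarrow> (N #>\<^bsub>G\<^esub> m1) <#>\<^bsub>G\<^esub> (N #>\<^bsub>G\<^esub> m2) = N #>\<^bsub>G\<^esub> (m1 \<otimes>\<^bsub>G\<^esub> m2)"
  using N.rcos_sum[of m1 m2] by simp

lemma comm_group_V: "comm_group V"
  using commutators G.m_inv_consistent[OF M] by (intro N.comm_group_FactGroup) simp

lemma coprime_order_V: "coprime (order V) q"
proof -
  have "order V dvd card M"
    using N.order_FactGroup_dvd unfolding order_def by simp
  then show ?thesis
    by (rule coprime_divisors[OF _ dvd_refl coprime_card_subgroup[OF M]])
qed

lemma \<beta>_rcos:
  assumes "a \<in> carrier A" "m \<in> M"
  shows "\<beta> a (N #>\<^bsub>G\<^esub> m) = N #>\<^bsub>G\<^esub> \<alpha> a m"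
  unfolding \<beta>_def using coset_image[OF N(1) N_invariant assms(1)] M_carrier assms(2) by auto

lemma \<beta>_hom: "a \<in> carrier A \<Longrightarrow> \<beta> a \<in> hom V V"
proof (rule homI)
  assume a: "a \<in> carrier A"
  have \<alpha>_M: "\<alpha> a m \<in> M" if "m \<in> M" for m
    using M_invariant a that by blast
  show "\<beta> a U \<in> carrier V" if "U \<in> carrier V" for U
    using that \<beta>_rcos[OF a] \<alpha>_M unfolding carrier_V by auto
  show "\<beta> a (U \<otimes>\<^bsub>V\<^esub> W) = \<beta> a U \<otimes>\<^bsub>V\<^esub> \<beta> a W"
    if U: "U \<in> carrier V" and W: "W \<in> carrier V" for U W
  proof -
    obtain m1 m2 where m: "m1 \<in> M" "m2 \<in> M" "U = N #>\<^bsub>G\<^esub> m1" "W = N #>\<^bsub>G\<^esub> m2"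
      using U W unfolding carrier_V by blast
    have "\<beta> a (U \<otimes>\<^bsub>V\<^esub> W) = N #>\<^bsub>G\<^esub> \<alpha> a (m1 \<otimes>\<^bsub>G\<^esub> m2)"
      using m by (simp add: rcos_sum \<beta>_rcos[OF a] subgroup.m_closed[OF M])
    also have "\<dots> = (N #>\<^bsub>G\<^esub> \<alpha> a m1) <#>\<^bsub>G\<^esub> (N #>\<^bsub>G\<^esub> \<alpha> a m2)"
      using m M_carrier by (simp add: \<alpha>_mult[OF a] rcos_sum \<alpha>_M subset_iff)
    finally show ?thesis
      using m by (simp add: \<beta>_rcos[OF a])
  qed
qed

lemma \<beta>_compose:
  assumes a: "a \<in> carrier A" and b: "b \<in> carrier A" and U: "U \<in> carrier V"
  shows "\<beta> (a \<otimes>\<^bsub>A\<^esub> b) U = \<beta> a (\<beta> b U)"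
proof -
  have "U \<subseteq> carrier G"
    using U M_carrier G.r_coset_subset_G[OF subgroup.subset[OF N(1)]] unfolding carrier_V by blast
  then show ?thesis
    unfolding \<beta>_def image_image using \<alpha>_compose[OF a b] by (intro image_cong) auto
qed

lemma \<beta>_B_trivial: "b \<in> B \<Longrightarrow> U \<in> carrier V \<Longrightarrow> \<beta> b U = U"
  unfolding carrier_V using B_trivial subgroup.subset[OF B] \<beta>_rcos by auto

sublocale quotient: comm_group_action V A \<beta>
  using comm_group_V A \<beta>_hom \<beta>_compose
  by (intro comm_group_action.intro comm_group_action_axioms.intro) (auto intro: comm_group.axioms)

lemma lift_fixed_coset:
  assumes U: "U \<in> carrier V" and i: "i \<in> {1..q+1}" and fixed: "\<forall>a\<in>As i. \<beta> a U = U"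
  shows "\<exists>z. z \<in> M \<and> U = N #>\<^bsub>G\<^esub> z \<and> (\<forall>a\<in>As i. \<alpha> a z = z)"
proof -
  obtain m where m: "m \<in> M" "U = N #>\<^bsub>G\<^esub> m" using U unfolding carrier_V by blast
  have m_carrier: "m \<in> carrier G" using m(1) M_carrier by blast
  have As_i: "subgroup (As i) A" "card (As i) = q ^ 2" using As_props[OF i] by auto
  have "\<forall>a\<in>As i. \<alpha> a ` (N #>\<^bsub>G\<^esub> m) \<subseteq> N #>\<^bsub>G\<^esub> m"
    using fixed m(2) unfolding \<beta>_def by simp
  then obtain z where z: "z \<in> N #>\<^bsub>G\<^esub> m" "\<forall>a\<in>As i. \<alpha> a z = z"
    using fixed_point_in_coset[OF N(1) As_i m_carrier] by blast
  have "N #>\<^bsub>G\<^esub> m \<subseteq> M"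
  proof
    fix x assume "x \<in> N #>\<^bsub>G\<^esub> m"
    then obtain n where "n \<in> N" "x = n \<otimes>\<^bsub>G\<^esub> m" unfolding r_coset_def by blast
    then show "x \<in> M" using m(1) N(2) subgroup.m_closed[OF M] by blast
  qed
  moreover have "U = N #>\<^bsub>G\<^esub> z"
    using G.repr_independence[OF z(1) m_carrier N(1)] m(2) by simp
  ultimately show ?thesis using z by blast
qed

lemma rcos_factorisation:
  assumes y: "y \<in> M"
  shows "\<exists>z. (\<forall>i\<in>{1..q+1}. z i \<in> M \<and> (\<forall>a\<in>As i. \<alpha> a (z i) = z i))
    \<and> N #>\<^bsub>G\<^esub> y = N #>\<^bsub>G\<^esub> mult_list G (map z [1..<q+2])"
proof -
  have "N #>\<^bsub>G\<^esub> y \<in> carrier V" using y unfolding carrier_V by blast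
  then obtain Y where Y: "\<forall>i\<in>{1..q+1}. Y i \<in> carrier V \<and> (\<forall>a\<in>As i. \<beta> a (Y i) = Y i)"
    and y_Y: "N #>\<^bsub>G\<^esub> y = finprod V Y {1..q+1}"
    using quotient.fixed_points_decomposition[OF fin_A coprime_order_V subgroup.subset[OF B] card_B
        \<beta>_B_trivial finite_atLeastAtMost conjunct1[OF As_props] card_As_containing]
    by blast
  have "\<forall>i\<in>{1..q+1}. \<exists>z. z \<in> M \<and> Y i = N #>\<^bsub>G\<^esub> z \<and> (\<forall>a\<in>As i. \<alpha> a z = z)"
  proof
    fix i assume i: "i \<in> {1..q+1}"
    show "\<exists>z. z \<in> M \<and> Y i = N #>\<^bsub>G\<^esub> z \<and> (\<forall>a\<in>As i. \<alpha> a z = z)"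
      by (rule lift_fixed_coset[OF _ i]) (use Y i in auto)
  qed
  then have "\<exists>z. \<forall>i\<in>{1..q+1}. z i \<in> M \<and> Y i = N #>\<^bsub>G\<^esub> z i \<and> (\<forall>a\<in>As i. \<alpha> a (z i) = z i)"
    by (rule bchoice)
  then obtain z where z: "\<forall>i\<in>{1..q+1}. z i \<in> M \<and> Y i = N #>\<^bsub>G\<^esub> z i \<and> (\<forall>a\<in>As i. \<alpha> a (z i) = z i)"
    by blast
  have "finprod V Y {1..q+1} = finprod V (\<lambda>i. N #>\<^bsub>G\<lparr>carrier := M\<rparr>\<^esub> z i) (set [1..<q+2])"
    using z by (intro quotient.V.finprod_cong') (auto simp: carrier_V)
  also have "\<dots> = N #>\<^bsub>G\<^esub> mult_list G (map z [1..<q+2])"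
  proof -
    have "\<forall>j\<in>set [1..<q+2]. z j \<in> carrier (G\<lparr>carrier := M\<rparr>)" using z by auto
    from N.finprod_FactGroup_rcos[OF comm_group_V distinct_upt this] show ?thesis
      by (simp only: r_coset_carrier_update mult_list_carrier_update)
  qed
  finally show ?thesis using y_Y z by blast
qed

theorem factors_modulo_section: "factors_modulo M N"
  unfolding factors_modulo_def
proof
  fix y assume "y \<in> fixed_points \<alpha> B M"
  then have y: "y \<in> M" unfolding fixed_points_def by blast
  obtain z where z: "\<forall>i\<in>{1..q+1}. z i \<in> M \<and> (\<forall>a\<in>As i. \<alpha> a (z i) = z i)"
    and y_z: "N #>\<^bsub>G\<^esub> y = N #>\<^bsub>G\<^esub> mult_list G (map z [1..<q+2])"
    using rcos_factorisation[OF y] by blast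
  have "mult_list G (map z [1..<q+2]) \<in> M"
    using z by (intro mult_list_closed[OF M]) auto
  then obtain n where "n \<in> N" "y = mult_list G (map z [1..<q+2]) \<otimes>\<^bsub>G\<^esub> n"
    using G.rcos_eq_imp_right_factor[OF M N(1) N_normal subsetD[OF M_carrier y] _ y_z] by blast
  moreover have "\<forall>i\<in>{1..q+1}. z i \<in> fixed_points \<alpha> (As i) M"
    using z unfolding fixed_points_def by blast
  ultimately show "\<exists>c. \<exists>k\<in>N. (\<forall>i\<in>{1..q+1}. c i \<in> fixed_points \<alpha> (As i) M)
      \<and> y = mult_list G (map c [1..<q+2]) \<otimes>\<^bsub>G\<^esub> k"
    by blast
qed

end

section \<open>Descent along central series\<close>

context coprime_action
begin

lemma abelian_section_fixed_points:
  assumes U: "subgroup U G" "\<forall>a\<in>carrier A. \<alpha> a ` U \<subseteq> U"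
    and K: "subgroup K G" "\<forall>a\<in>carrier A. \<alpha> a ` K \<subseteq> K"
    and L: "subgroup L G" "\<forall>a\<in>carrier A. \<alpha> a ` L \<subseteq> L"
    and KL: "K \<subseteq> L" "L \<subseteq> U"
    and K_normal: "\<forall>x\<in>U. \<forall>k\<in>K. x \<otimes>\<^bsub>G\<^esub> k \<otimes>\<^bsub>G\<^esub> inv\<^bsub>G\<^esub> x \<in> K"
    and LU_commutators: "\<forall>l\<in>L. \<forall>x\<in>U. commutator G l x \<in> K"
  shows "abelian_section A G \<alpha> q B As (fixed_points \<alpha> B U \<inter> L) (fixed_points \<alpha> B U \<inter> K)"
proof -
  define Q where "Q = fixed_points \<alpha> B U"
  have Q: "subgroup Q G"
    unfolding Q_def by (rule fixed_points_subgroup[OF subgroup.subset[OF B] U(1)])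
  have Q_invariant: "\<forall>a\<in>carrier A. \<alpha> a ` Q \<subseteq> Q"
    unfolding Q_def by (rule fixed_points_B_invariant[OF U(2) subgroup.subset[OF U(1)]])
  have QU: "Q \<subseteq> U" unfolding Q_def fixed_points_def by blast
  have Q_conj: "x \<otimes>\<^bsub>G\<^esub> y \<otimes>\<^bsub>G\<^esub> inv\<^bsub>G\<^esub> x \<in> Q" "commutator G x y \<in> Q" if "x \<in> Q" "y \<in> Q" for x y
    using that by (simp_all add: subgroup.m_closed[OF Q] subgroup.m_inv_closed[OF Q])
  have "abelian_section A G \<alpha> q B As (Q \<inter> L) (Q \<inter> K)"
  proof (intro abelian_section.intro[OF coprime_action_axioms] abelian_section_axioms.intro)
    show "subgroup (Q \<inter> L) G" "subgroup (Q \<inter> K) G"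
      using G.subgroups_Inter_pair Q K(1) L(1) by auto
    show "Q \<inter> K \<subseteq> Q \<inter> L" using KL(1) by blast
    show "\<forall>m\<in>Q \<inter> L. \<forall>n\<in>Q \<inter> K. m \<otimes>\<^bsub>G\<^esub> n \<otimes>\<^bsub>G\<^esub> inv\<^bsub>G\<^esub> m \<in> Q \<inter> K"
      using K_normal KL(2) Q_conj(1) by blast
    show "\<forall>x\<in>Q \<inter> L. \<forall>y\<in>Q \<inter> L. commutator G x y \<in> Q \<inter> K"
      using LU_commutators KL(2) Q_conj(2) by blast
    show "\<forall>a\<in>carrier A. \<alpha> a ` (Q \<inter> L) \<subseteq> Q \<inter> L" "\<forall>a\<in>carrier A. \<alpha> a ` (Q \<inter> K) \<subseteq> Q \<inter> K"
      using Q_invariant L(2) K(2) by blast+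
    show "\<forall>b\<in>B. \<forall>x\<in>Q \<inter> L. \<alpha> b x = x"
      unfolding Q_def fixed_points_def by blast
  qed
  then show ?thesis unfolding Q_def .
qed

lemma factor_remainder_fixed:
  assumes U: "subgroup U G" and y: "y \<in> fixed_points \<alpha> B U"
    and c: "\<forall>i\<in>{1..q+1}. c i \<in> fixed_points \<alpha> (As i) U"
    and m: "m \<in> carrier G" "y = mult_list G (map c [1..<q+2]) \<otimes>\<^bsub>G\<^esub> m"
  shows "m \<in> fixed_points \<alpha> B U"
proof -
  have Q: "subgroup (fixed_points \<alpha> B U) G"
    by (rule fixed_points_subgroup[OF subgroup.subset[OF B] U])
  have x: "mult_list G (map c [1..<q+2]) \<in> fixed_points \<alpha> B U"
    by (rule mult_list_fixed_points[OF U c])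
  then have "m = inv\<^bsub>G\<^esub> mult_list G (map c [1..<q+2]) \<otimes>\<^bsub>G\<^esub> y"
    using m subgroup.mem_carrier[OF Q] by simp
  then show ?thesis
    using x y subgroup.m_closed[OF Q] subgroup.m_inv_closed[OF Q] by simp
qed

lemma merge_factorisations:
  assumes U: "subgroup U G" and K: "subgroup K G" and L: "subgroup L G" "L \<subseteq> U"
    and K_normal: "\<forall>x\<in>U. \<forall>k\<in>K. x \<otimes>\<^bsub>G\<^esub> k \<otimes>\<^bsub>G\<^esub> inv\<^bsub>G\<^esub> x \<in> K"
    and LU_commutators: "\<forall>l\<in>L. \<forall>x\<in>U. commutator G l x \<in> K"
    and c: "\<forall>i\<in>{1..q+1}. c i \<in> fixed_points \<alpha> (As i) U"
    and w: "\<forall>i\<in>{1..q+1}. w i \<in> fixed_points \<alpha> (As i) U \<inter> L" and n: "n \<in> K"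
  shows "\<exists>k\<in>K. (\<forall>i\<in>{1..q+1}. c i \<otimes>\<^bsub>G\<^esub> w i \<in> fixed_points \<alpha> (As i) U)
    \<and> mult_list G (map c [1..<q+2]) \<otimes>\<^bsub>G\<^esub> (mult_list G (map w [1..<q+2]) \<otimes>\<^bsub>G\<^esub> n)
      = mult_list G (map (\<lambda>j. c j \<otimes>\<^bsub>G\<^esub> w j) [1..<q+2]) \<otimes>\<^bsub>G\<^esub> k"
proof -
  have cw: "\<forall>j\<in>set [1..<q+2]. c j \<in> U \<and> w j \<in> L"
    using c w unfolding fixed_points_def by auto
  then obtain k where k: "k \<in> K" and rearranged: "mult_list G (map c [1..<q+2]) \<otimes>\<^bsub>G\<^esub> mult_list G (map w [1..<q+2])
      = mult_list G (map (\<lambda>j. c j \<otimes>\<^bsub>G\<^esub> w j) [1..<q+2]) \<otimes>\<^bsub>G\<^esub> k"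
    using G.mult_list_mult_rearrange[OF U K L K_normal LU_commutators] by blast
  have "\<forall>j\<in>set [1..<q+2]. c j \<in> carrier G \<and> w j \<in> carrier G"
    using cw L(2) subgroup.mem_carrier[OF U] by blast
  then have "mult_list G (map c [1..<q+2]) \<in> carrier G" "mult_list G (map w [1..<q+2]) \<in> carrier G"
    "mult_list G (map (\<lambda>j. c j \<otimes>\<^bsub>G\<^esub> w j) [1..<q+2]) \<in> carrier G"
    by (auto intro!: mult_list_closed[OF G.subgroup_self] simp del: upt_Suc)
  then have "mult_list G (map c [1..<q+2]) \<otimes>\<^bsub>G\<^esub> (mult_list G (map w [1..<q+2]) \<otimes>\<^bsub>G\<^esub> n)
      = mult_list G (map (\<lambda>j. c j \<otimes>\<^bsub>G\<^esub> w j) [1..<q+2]) \<otimes>\<^bsub>G\<^esub> (k \<otimes>\<^bsub>G\<^esub> n)"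
    using rearranged subgroup.mem_carrier[OF K] k n by (simp add: G.m_assoc[symmetric])
  moreover have "c i \<otimes>\<^bsub>G\<^esub> w i \<in> fixed_points \<alpha> (As i) U" if i: "i \<in> {1..q+1}" for i
    using c w i subgroup.m_closed[OF fixed_points_subgroup[OF subgroup.subset U]] As_props by blast
  moreover have "k \<otimes>\<^bsub>G\<^esub> n \<in> K" using k n subgroup.m_closed[OF K] by blast
  ultimately show ?thesis by blast
qed

lemma factors_modulo_descend:
  assumes U: "subgroup U G" "\<forall>a\<in>carrier A. \<alpha> a ` U \<subseteq> U"
    and K: "subgroup K G" "\<forall>a\<in>carrier A. \<alpha> a ` K \<subseteq> K"
    and L: "subgroup L G" "\<forall>a\<in>carrier A. \<alpha> a ` L \<subseteq> L"
    and KL: "K \<subseteq> L" "L \<subseteq> U"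
    and K_normal: "\<forall>x\<in>U. \<forall>k\<in>K. x \<otimes>\<^bsub>G\<^esub> k \<otimes>\<^bsub>G\<^esub> inv\<^bsub>G\<^esub> x \<in> K"
    and LU_commutators: "\<forall>l\<in>L. \<forall>x\<in>U. commutator G l x \<in> K"
    and factors: "factors_modulo U L"
  shows "factors_modulo U K"
  unfolding factors_modulo_def
proof
  define Q where "Q = fixed_points \<alpha> B U"
  interpret factor: abelian_section A G \<alpha> q B As "Q \<inter> L" "Q \<inter> K"
    unfolding Q_def by (rule abelian_section_fixed_points[OF U K L KL K_normal LU_commutators])
  fix y assume y: "y \<in> fixed_points \<alpha> B U"
  obtain c m where c: "\<forall>i\<in>{1..q+1}. c i \<in> fixed_points \<alpha> (As i) U"
    and m: "m \<in> L" "y = mult_list G (map c [1..<q+2]) \<otimes>\<^bsub>G\<^esub> m"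
    using factors y unfolding factors_modulo_def by blast
  have "m \<in> fixed_points \<alpha> B U"
    using factor_remainder_fixed[OF U(1) y c _ m(2)] m(1) KL(2) subgroup.mem_carrier[OF U(1)] by blast
  then have "m \<in> fixed_points \<alpha> B (Q \<inter> L)"
    using m(1) unfolding Q_def fixed_points_def by blast
  then obtain w n where w: "\<forall>i\<in>{1..q+1}. w i \<in> fixed_points \<alpha> (As i) (Q \<inter> L)"
    and n: "n \<in> Q \<inter> K" "m = mult_list G (map w [1..<q+2]) \<otimes>\<^bsub>G\<^esub> n"
    using factor.factors_modulo_section unfolding factors_modulo_def by blast
  have w': "\<forall>i\<in>{1..q+1}. w i \<in> fixed_points \<alpha> (As i) U \<inter> L"
    using w KL(2) unfolding fixed_points_def by blast
  obtain k where "k \<in> K" "\<forall>i\<in>{1..q+1}. c i \<otimes>\<^bsub>G\<^esub> w i \<in> fixed_points \<alpha> (As i) U"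
    and merged: "mult_list G (map c [1..<q+2]) \<otimes>\<^bsub>G\<^esub> (mult_list G (map w [1..<q+2]) \<otimes>\<^bsub>G\<^esub> n)
      = mult_list G (map (\<lambda>j. c j \<otimes>\<^bsub>G\<^esub> w j) [1..<q+2]) \<otimes>\<^bsub>G\<^esub> k"
    using merge_factorisations[OF U(1) K(1) L(1) KL(2) K_normal LU_commutators c w' IntD2[OF n(1)]]
    by blast
  moreover have "y = mult_list G (map (\<lambda>j. c j \<otimes>\<^bsub>G\<^esub> w j) [1..<q+2]) \<otimes>\<^bsub>G\<^esub> k"
    using m(2) n(2) merged by simp
  ultimately show "\<exists>c. \<exists>k\<in>K. (\<forall>i\<in>{1..q+1}. c i \<in> fixed_points \<alpha> (As i) U)
      \<and> y = mult_list G (map c [1..<q+2]) \<otimes>\<^bsub>G\<^esub> k"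
    by (intro exI[of _ "\<lambda>j. c j \<otimes>\<^bsub>G\<^esub> w j"] bexI[of _ k] conjI ballI) auto
qed

lemma comm_subgroup_invariant:
  assumes a: "a \<in> carrier A" and K: "K \<subseteq> carrier G" "\<alpha> a ` K \<subseteq> K"
    and H: "H \<subseteq> carrier G" "\<alpha> a ` H \<subseteq> H"
  shows "\<alpha> a ` comm_subgroup G K H \<subseteq> comm_subgroup G K H"
  unfolding comm_subgroup_def
proof (rule G.generate_image_subset[OF \<alpha>_group_hom[OF a]])
  show "(\<Union>k\<in>K. \<Union>h\<in>H. {commutator G k h}) \<subseteq> carrier G"
    using K(1) H(1) by (auto simp: subset_iff)
  show "\<alpha> a ` (\<Union>k\<in>K. \<Union>h\<in>H. {commutator G k h}) \<subseteq> (\<Union>k\<in>K. \<Union>h\<in>H. {commutator G k h})"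
  proof
    fix c assume "c \<in> \<alpha> a ` (\<Union>k\<in>K. \<Union>h\<in>H. {commutator G k h})"
    then obtain k h where kh: "k \<in> K" "h \<in> H" and c: "c = \<alpha> a (commutator G k h)" by blast
    have "k \<in> carrier G" "h \<in> carrier G" using kh K(1) H(1) by auto
    then have "c = commutator G (\<alpha> a k) (\<alpha> a h)"
      unfolding c by (simp add: \<alpha>_mult[OF a] \<alpha>_inv[OF a] \<alpha>_closed[OF a])
    moreover have "\<alpha> a k \<in> K" "\<alpha> a h \<in> H" using kh K(2) H(2) by blast+
    ultimately show "c \<in> (\<Union>k\<in>K. \<Union>h\<in>H. {commutator G k h})" by blast
  qed
qed

lemma lower_central_invariant:
  assumes H: "subgroup H G" "\<forall>a\<in>carrier A. \<alpha> a ` H \<subseteq> H"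
  shows "\<forall>a\<in>carrier A. \<alpha> a ` lower_central G H n \<subseteq> lower_central G H n"
proof (induct n)
  case (Suc n)
  have "lower_central G H n \<subseteq> carrier G" "H \<subseteq> carrier G"
    using G.lower_central_normal[OF H(1), of n] subgroup.subset[OF H(1)] by auto
  then show ?case
    using comm_subgroup_invariant Suc H(2) by simp
qed (use H in simp)

theorem fixed_points_nilpotent:
  assumes nilpotent: "nilpotent_subgroup G H" and invariant: "\<forall>a\<in>carrier A. \<alpha> a ` H \<subseteq> H"
  shows "fixed_points \<alpha> B H = set_prod_list G (map (\<lambda>i. fixed_points \<alpha> (As i) H) [1..<q+2])"
proof -
  have H: "subgroup H G" using nilpotent unfolding nilpotent_subgroup_def by blast
  have "factors_modulo H (lower_central G H n)" for n
  proof (induct n)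
    case 0
    then show ?case using factors_modulo_self[OF H] by simp
  next
    case (Suc n)
    have "subgroup (lower_central G H n) G" "lower_central G H n \<subseteq> H"
      "subgroup (lower_central G H (Suc n)) G"
      "\<forall>h\<in>H. \<forall>k\<in>lower_central G H (Suc n). h \<otimes>\<^bsub>G\<^esub> k \<otimes>\<^bsub>G\<^esub> inv\<^bsub>G\<^esub> h \<in> lower_central G H (Suc n)"
      using G.lower_central_normal[OF H] by blast+
    moreover have "lower_central G H (Suc n) \<subseteq> lower_central G H n"
      using G.comm_subgroup_subset G.lower_central_normal[OF H, of n] subgroup.subset[OF H] by simp
    moreover have "\<forall>l\<in>lower_central G H n. \<forall>x\<in>H. commutator G l x \<in> lower_central G H (Suc n)"
      using G.commutator_in_comm_subgroup by simp
    ultimately show ?case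
      using factors_modulo_descend[OF H invariant _ lower_central_invariant[OF H invariant]
          _ lower_central_invariant[OF H invariant]] Suc
      by blast
  qed
  moreover obtain n where "lower_central G H n = {\<one>\<^bsub>G\<^esub>}"
    using nilpotent unfolding nilpotent_subgroup_def by blast
  ultimately show ?thesis
    using factors_modulo_trivial[OF H] by metis
qed

lemma center_mod_invariant:
  assumes P: "subgroup P G" "\<forall>a\<in>carrier A. \<alpha> a ` P \<subseteq> P"
    and N_invariant: "\<forall>a\<in>carrier A. \<alpha> a ` N \<subseteq> N"
  shows "\<forall>a\<in>carrier A. \<alpha> a ` center_mod G P N \<subseteq> center_mod G P N"
proof (intro ballI image_subsetI)
  fix a x assume a: "a \<in> carrier A" and x: "x \<in> center_mod G P N"
  have P_carrier: "P \<subseteq> carrier G" using P(1) subgroup.subset by blast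
  have P_image: "\<alpha> a ` P = P" using \<alpha>_image_eq[OF a P_carrier] P(2) a by blast
  have "commutator G (\<alpha> a x) y \<in> N" if y: "y \<in> P" for y
  proof -
    obtain y' where y': "y' \<in> P" "y = \<alpha> a y'" using y P_image by blast
    have "x \<in> carrier G" "y' \<in> carrier G" using x y'(1) P_carrier unfolding center_mod_def by auto
    then have "commutator G (\<alpha> a x) y = \<alpha> a (commutator G x y')"
      unfolding y'(2) by (simp add: \<alpha>_mult[OF a] \<alpha>_inv[OF a] \<alpha>_closed[OF a])
    moreover have "commutator G x y' \<in> N" using x y'(1) unfolding center_mod_def by blast
    ultimately show ?thesis using N_invariant a by blast
  qed
  moreover have "\<alpha> a x \<in> P" using x P(2) a unfolding center_mod_def by blast
  ultimately show "\<alpha> a x \<in> center_mod G P N" unfolding center_mod_def by blast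
qed

lemma factors_modulo_p_group:
  assumes P: "subgroup P G" "\<forall>a\<in>carrier A. \<alpha> a ` P \<subseteq> P"
    and p: "Factorial_Ring.prime p" and card_P: "card P = p ^ k"
    and N: "subgroup N G" "N \<subseteq> P" "\<forall>h\<in>P. \<forall>n\<in>N. h \<otimes>\<^bsub>G\<^esub> n \<otimes>\<^bsub>G\<^esub> inv\<^bsub>G\<^esub> h \<in> N"
      "\<forall>a\<in>carrier A. \<alpha> a ` N \<subseteq> N"
  shows "factors_modulo P N"
  using N
proof (induct "card P - card N" arbitrary: N rule: less_induct)
  case (less N)
  show ?case
  proof (cases "N = P")
    case True
    then show ?thesis using factors_modulo_self[OF P(1)] by simp
  next
    case False
    define Z where "Z = center_mod G P N"
    have Z: "subgroup Z G" "N \<subseteq> Z" "Z \<subseteq> P"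
      "\<forall>h\<in>P. \<forall>z\<in>Z. h \<otimes>\<^bsub>G\<^esub> z \<otimes>\<^bsub>G\<^esub> inv\<^bsub>G\<^esub> h \<in> Z" "\<forall>a\<in>carrier A. \<alpha> a ` Z \<subseteq> Z"
      unfolding Z_def
      using G.center_mod_subgroup[OF P(1) less.prems(1,3)] G.subset_center_mod[OF P(1) less.prems(1-3)]
        G.center_mod_normal[OF P(1) less.prems(3)] center_mod_invariant[OF P less.prems(4)]
      by (auto simp: center_mod_def)
    obtain x where "x \<in> Z" "x \<notin> N"
      using G.center_mod_grows[OF fin_G P(1) card_P p less.prems(1-3) False] unfolding Z_def by blast
    then have "N \<subset> Z" using Z(2) by blast
    moreover have fin_P: "finite P" using fin_G subgroup.subset[OF P(1)] finite_subset by blast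
    ultimately have "card N < card Z"
      using finite_subset[OF Z(3)] by (intro psubset_card_mono) auto
    moreover have "card Z \<le> card P" using Z(3) fin_P by (intro card_mono)
    ultimately have "factors_modulo P Z"
      using less.hyps[OF _ Z(1,3,4,5)] by simp
    moreover have "\<forall>z\<in>Z. \<forall>y\<in>P. commutator G z y \<in> N" unfolding Z_def center_mod_def by blast
    ultimately show ?thesis
      using factors_modulo_descend[OF P less.prems(1,4) Z(1,5) Z(2,3) less.prems(3)] by blast
  qed
qed

theorem fixed_points_p_group:
  assumes P: "subgroup P G" "\<forall>a\<in>carrier A. \<alpha> a ` P \<subseteq> P"
    and p: "Factorial_Ring.prime p" and card_P: "card P = p ^ k"
  shows "fixed_points \<alpha> B P = set_prod_list G (map (\<lambda>i. fixed_points \<alpha> (As i) P) [1..<q+2])"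
proof (rule factors_modulo_trivial[OF P(1) factors_modulo_p_group[OF P p card_P G.triv_subgroup]])
  show "{\<one>\<^bsub>G\<^esub>} \<subseteq> P" using subgroup.one_closed[OF P(1)] by blast
  show "\<forall>h\<in>P. \<forall>n\<in>{\<one>\<^bsub>G\<^esub>}. h \<otimes>\<^bsub>G\<^esub> n \<otimes>\<^bsub>G\<^esub> inv\<^bsub>G\<^esub> h \<in> {\<one>\<^bsub>G\<^esub>}"
    using subgroup.mem_carrier[OF P(1)] by simp
  show "\<forall>a\<in>carrier A. \<alpha> a ` {\<one>\<^bsub>G\<^esub>} \<subseteq> {\<one>\<^bsub>G\<^esub>}" using \<alpha>_one by simp
qed

end

theorem lemma2p3:
  fixes A :: "('c, 'd) monoid_scheme" and G :: "('a, 'b) monoid_scheme"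
    and \<alpha> :: "'c \<Rightarrow> 'a \<Rightarrow> 'a"
    and q p :: nat and B :: "'c set" and P H :: "'a set"
    and As :: "nat \<Rightarrow> 'c set"
  assumes "Factorial_Ring.prime q"
    and "group A" and "finite (carrier A)" and "order A = q ^ 3"
    and "\<forall>a \<in> carrier A. a [^]\<^bsub>A\<^esub> q = \<one>\<^bsub>A\<^esub>"
    and "subgroup B A" and "card B = q" and "B \<subseteq> group_center A"
    and "group G" and "finite (carrier G)" and "coprime (order G) q"
    and "acts_by_automorphisms A G \<alpha>"
    and "carrier G = P <#>\<^bsub>G\<^esub> H"
    and "subgroup P G" and "subgroup H G"
    and "\<forall>a \<in> carrier A. \<alpha> a ` P \<subseteq> P" and "\<forall>a \<in> carrier A. \<alpha> a ` H \<subseteq> H"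
    and "Factorial_Ring.prime p" and "P \<lhd> G" and "\<exists>k. card P = p ^ k"
    and "nilpotent_subgroup G H" and "\<not> p dvd card H"
    and "bij_betw As {1..q+1} {S. subgroup S A \<and> card S = q ^ 2 \<and> B \<subseteq> S}"
  shows "fixed_points \<alpha> B P = set_prod_list G (map (\<lambda>i. fixed_points \<alpha> (As i) P) [1..<q+2])
       \<and> fixed_points \<alpha> B H = set_prod_list G (map (\<lambda>i. fixed_points \<alpha> (As i) H) [1..<q+2])"
proof -
  interpret coprime_action A G \<alpha> q B As
    by (rule coprime_action.intro[OF assms(1-3,5-12,23)])
  obtain k where "card P = p ^ k" using assms(20) by blast
  then show ?thesis
    using fixed_points_p_group[OF assms(14,16,18)] fixed_points_nilpotent[OF assms(21,17)] by blast
qed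

end
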